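(* Let $\mathsf{T} = (T,\eta,\mu)$ be a monoid in a left-skew monoidal category $(\mathcal{C},\mathsf{I},\otimes,\lambda,\rho,\alpha)$, and let $(\mathcal{E},\mathcal{M})$ be an orthogonal factorization system on $\mathcal{C}$ such that $\mathcal{E}$ is closed under $(-)\otimes S$ for each object $(S,s)$ of $\mathcal{M}/T$. Then the $\mathcal{M}$-grading $(\mathcal{M}/\mathsf{T}, T_{\mathcal{M}}, \tau)$ of $\mathsf{T}$ (see context) is a pseudoterminal object of the 2-category $\mathrm{Grade}_{\mathcal{M}}(\mathsf{T})$. Explicitly, for every $\mathcal{M}$-grading $(\mathcal{G},G,g)$ of the monoid $\mathsf{T}$: (i) there is a morphism of $\mathcal{M}$-gradings $(F,f):(\mathcal{G},G,g)\to(\mathcal{M}/\mathsf{T},T_{\mathcal{M}},\tau)$; (ii) it is essentially unique, in that there is an assignment, natural in $(F',f')$, of an invertible 2-cell $(F',f')\cong(F,f)$ to every morphism of $\mathcal{M}$-gradings $(F',f'):(\mathcal{G},G,g)\to(\mathcal{M}/\mathsf{T},T_{\mathcal{M}},\tau)$.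
   Context: Left-skew monoidal category: category with object $\mathsf{I}$, functor $\otimes$, and natural (not necessarily invertible) $\lambda_X:\mathsf{I}\otimes X\to X$, $\rho_X:X\to X\otimes\mathsf{I}$, $\alpha_{X,Y,Z}:(X\otimes Y)\otimes Z\to X\otimes(Y\otimes Z)$ satisfying $\lambda_{\mathsf{I}}\rho_{\mathsf{I}}=\mathrm{id}$, $(X\otimes\lambda_Y)\alpha_{X,\mathsf{I},Y}(\rho_X\otimes Y)=\mathrm{id}$, $\lambda_{X\otimes Y}\alpha_{\mathsf{I},X,Y}=\lambda_X\otimes Y$, $\alpha_{X,Y,\mathsf{I}}\rho_{X\otimes Y}=X\otimes\rho_Y$, and the pentagon $(X\otimes\alpha_{Y,Z,W})\alpha_{X,Y\otimes Z,W}(\alpha_{X,Y,Z}\otimes W)=\alpha_{X,Y,Z\otimes W}\alpha_{X\otimes Y,Z,W}$. A monoid: $\eta:\mathsf{I}\to T$, $\mu:T\otimes T\to T$ with $\mu(\eta\otimes T)=\lambda_T$, $\mu(T\otimes\eta)\rho_T=\mathrm{id}$, $\mu(\mu\otimes T)=\mu(T\otimes\mu)\alpha_{T,T,T}$. Lax monoidal functors between skew monoidal categories (functor $G$ with $\eta^G:\mathsf{I}\to G I$ and natural $\mu^G_{d,d'}:Gd\otimes Gd'\to G(d\odot d')$ satisfying the usual unit and associativity axioms) and monoidal transformations are defined as for monoidal categories. Orthogonal factorization system $(\mathcal{E},\mathcal{M})$: both classes contain isomorphisms and are closed under composition, every square $g e = m f$ with $e\in\mathcal{E}$, $m\in\mathcal{M}$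 has a unique diagonal $d$ with $de=f$, $md=g$, and every morphism factors as an $\mathcal{E}$-morphism followed by an $\mathcal{M}$-morphism. $\mathcal{M}$-grading of $\mathsf{T}$: a skew monoidal category $\mathcal{G}=(\mathcal{G},I,\odot)$, a lax monoidal functor $G:\mathcal{G}\to\mathcal{C}$, and a monoidal transformation with components $g_d:Gd\to T$ in $\mathcal{M}$ (monoidality: $g_I\circ\eta^G=\eta$ and $g_{d\odot d'}\circ\mu^G_{d,d'}=\mu\circ(g_d\otimes g_{d'})$). A morphism $(F,f)$ of gradings is a lax monoidal $F:\mathcal{G}\to\mathcal{G}'$ with a monoidal natural isomorphism $f:G'\cdot F\cong G$ such that $g_d\circ f_d = g'_{Fd}$. A 2-cell $\beta:(F,f)\Rightarrow(F',f')$ is a monoidal transformation $\beta:F\Rightarrow F'$ with $f'\circ(G'\cdot\beta)=f$. These form the 2-category $\mathrm{Grade}_{\mathcal{M}}(\mathsf{T})$. The canonical grading: $\mathcal{M}/T$ has objects $(S,s)$ with $s:S\to T$ in $\mathcal{M}$ and morphisms $f$ with $s'f=s$. Factor $\eta=j\circ q$ ($q:\mathsf{I}\to\mathsf{J}\in\mathcal{E}$, $j\in\mathcal{M}$) and $\mu\circ(s\otimes s')=(s\boxdot s')\circ q_{S,S'}$ ($q_{S,S'}:S\otimes S'\to S\boxdot S'\in\mathcal{E}$, $s\boxdot s'\in\mathcal{M}$). Then $\mathcal{M}/\mathsf{T}=(\mathcal{M}/T,(\mathsf{J},j),\boxdot)$ is a skew monoidal category, with action on morphisms and structure maps $\ell,r,a$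 the unique morphisms (diagonals) compatible with the $q$'s and the structure maps of $\mathcal{C}$: $(f\boxdot f')q_{S_1,S_1'}=q_{S_2,S_2'}(f\otimes f')$; $\ell_S q_{\mathsf{J},S}(q\otimes S)=\lambda_S$; $r_S=q_{S,\mathsf{J}}(S\otimes q)\rho_S$; $a\, q_{S\boxdot S',S''}(q_{S,S'}\otimes S'')=q_{S,S'\boxdot S''}(S\otimes q_{S',S''})\alpha$ (each also commuting with the $\mathcal{M}$-maps to $T$). The lax monoidal functor $T_{\mathcal{M}}:\mathcal{M}/\mathsf{T}\to\mathcal{C}$ sends $(S,s)\mapsto S$, with unit $q$ and multiplication $q_{S,S'}$; the monoidal transformation $\tau$ has components $\tau_{(S,s)}=s$. *)

theory Defs
  imports Main
begin

section \<open>Categories (explicit carriers)\<close>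

record ('o,'m) cat =
  cobj :: "'o set"
  carr :: "'m set"
  cdom :: "'m \<Rightarrow> 'o"
  ccod :: "'m \<Rightarrow> 'o"
  cid  :: "'o \<Rightarrow> 'm"
  ccomp :: "'m \<Rightarrow> 'm \<Rightarrow> 'm"   (* ccomp C g f = g o f *)

definition hom :: "('o,'m,'z) cat_scheme \<Rightarrow> 'o \<Rightarrow> 'o \<Rightarrow> 'm set" where
  "hom C a b = {f \<in> carr C. cdom C f = a \<and> ccod C f = b}"

definition is_category :: "('o,'m,'z) cat_scheme \<Rightarrow> bool" where
  "is_category C \<longleftrightarrow>
    (\<forall>f\<in>carr C. cdom C f \<in> cobj C \<and> ccod C f \<in> cobj C) \<and>
    (\<forall>a\<in>cobj C. cid C a \<in> hom C a a) \<and>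
    (\<forall>f\<in>carr C. \<forall>g\<in>carr C. cdom C g = ccod C f \<longrightarrow>
        ccomp C g f \<in> hom C (cdom C f) (ccod C g)) \<and>
    (\<forall>f\<in>carr C. ccomp C f (cid C (cdom C f)) = f \<and> ccomp C (cid C (ccod C f)) f = f) \<and>
    (\<forall>f\<in>carr C. \<forall>g\<in>carr C. \<forall>h\<in>carr C. cdom C g = ccod C f \<longrightarrow> cdom C h = ccod C g \<longrightarrow>
        ccomp C h (ccomp C g f) = ccomp C (ccomp C h g) f)"

definition is_iso :: "('o,'m,'z) cat_scheme \<Rightarrow> 'm \<Rightarrow> bool" where
  "is_iso C f \<longleftrightarrow> f \<in> carr C \<and>
    (\<exists>g\<in>hom C (ccod C f) (cdom C f).
        ccomp C g f = cid C (cdom C f) \<and> ccomp C f g = cid C (ccod C f))"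

section \<open>Left-skew monoidal categories\<close>

record ('o,'m) skewcat = "('o,'m) cat" +
  tunit :: 'o
  tens  :: "'o \<Rightarrow> 'o \<Rightarrow> 'o"
  tensm :: "'m \<Rightarrow> 'm \<Rightarrow> 'm"
  lam   :: "'o \<Rightarrow> 'm"
  rho   :: "'o \<Rightarrow> 'm"
  alph  :: "'o \<Rightarrow> 'o \<Rightarrow> 'o \<Rightarrow> 'm"

definition is_skew :: "('o,'m,'z) skewcat_scheme \<Rightarrow> bool" where
  "is_skew C \<longleftrightarrow>
   (let Ob = cobj C; Ar = carr C; dm = cdom C; cd = ccod C; cp = ccomp C; i = cid C;
        I = tunit C; t = tens C; tm = tensm C; l = lam C; r = rho C; a = alph C in
    is_category C \<and>
    I \<in> Ob \<and>
    (\<forall>x\<in>Ob. \<forall>y\<in>Ob. t x y \<in> Ob) \<and>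
    (\<forall>f\<in>Ar. \<forall>g\<in>Ar. tm f g \<in> hom C (t (dm f) (dm g)) (t (cd f) (cd g))) \<and>
    (\<forall>x\<in>Ob. \<forall>y\<in>Ob. tm (i x) (i y) = i (t x y)) \<and>
    (\<forall>f\<in>Ar. \<forall>g\<in>Ar. \<forall>f'\<in>Ar. \<forall>g'\<in>Ar. dm g = cd f \<longrightarrow> dm g' = cd f' \<longrightarrow>
        tm (cp g f) (cp g' f') = cp (tm g g') (tm f f')) \<and>
    (\<forall>x\<in>Ob. l x \<in> hom C (t I x) x \<and> r x \<in> hom C x (t x I)) \<and>
    (\<forall>x\<in>Ob. \<forall>y\<in>Ob. \<forall>z\<in>Ob. a x y z \<in> hom C (t (t x y) z) (t x (t y z))) \<and>
    (\<forall>f\<in>Ar. cp f (l (dm f)) = cp (l (cd f)) (tm (i I) f)) \<and>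
    (\<forall>f\<in>Ar. cp (tm f (i I)) (r (dm f)) = cp (r (cd f)) f) \<and>
    (\<forall>f\<in>Ar. \<forall>g\<in>Ar. \<forall>h\<in>Ar.
        cp (tm f (tm g h)) (a (dm f) (dm g) (dm h)) = cp (a (cd f) (cd g) (cd h)) (tm (tm f g) h)) \<and>
    cp (l I) (r I) = i I \<and>
    (\<forall>x\<in>Ob. \<forall>y\<in>Ob. cp (tm (i x) (l y)) (cp (a x I y) (tm (r x) (i y))) = i (t x y)) \<and>
    (\<forall>x\<in>Ob. \<forall>y\<in>Ob. cp (l (t x y)) (a I x y) = tm (l x) (i y)) \<and>
    (\<forall>x\<in>Ob. \<forall>y\<in>Ob. cp (a x y I) (r (t x y)) = tm (i x) (r y)) \<and>
    (\<forall>x\<in>Ob. \<forall>y\<in>Ob. \<forall>z\<in>Ob. \<forall>w\<in>Ob.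
        cp (tm (i x) (a y z w)) (cp (a x (t y z) w) (tm (a x y z) (i w)))
        = cp (a x y (t z w)) (a (t x y) z w)))"

definition is_monoid :: "('o,'m,'z) skewcat_scheme \<Rightarrow> 'o \<Rightarrow> 'm \<Rightarrow> 'm \<Rightarrow> bool" where
  "is_monoid C T e m \<longleftrightarrow>
   (let cp = ccomp C; i = cid C; tm = tensm C in
    T \<in> cobj C \<and> e \<in> hom C (tunit C) T \<and> m \<in> hom C (tens C T T) T \<and>
    cp m (tm e (i T)) = lam C T \<and>
    cp m (cp (tm (i T) e) (rho C T)) = i T \<and>
    cp m (tm m (i T)) = cp m (cp (tm (i T) m) (alph C T T T)))"

section \<open>Orthogonal factorization systems\<close>

definition is_ofs :: "('o,'m,'z) cat_scheme \<Rightarrow> 'm set \<Rightarrow> 'm set \<Rightarrow> bool" where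
  "is_ofs C E M \<longleftrightarrow>
   (let dm = cdom C; cd = ccod C; cp = ccomp C in
    E \<subseteq> carr C \<and> M \<subseteq> carr C \<and>
    {f. is_iso C f} \<subseteq> E \<and> {f. is_iso C f} \<subseteq> M \<and>
    (\<forall>f\<in>E. \<forall>g\<in>E. dm g = cd f \<longrightarrow> cp g f \<in> E) \<and>
    (\<forall>f\<in>M. \<forall>g\<in>M. dm g = cd f \<longrightarrow> cp g f \<in> M) \<and>
    (\<forall>e\<in>E. \<forall>n\<in>M. \<forall>f\<in>carr C. \<forall>g\<in>carr C.
        dm f = dm e \<longrightarrow> cd f = dm n \<longrightarrow> dm g = cd e \<longrightarrow> cd g = cd n \<longrightarrow> cp g e = cp n f \<longrightarrow>
        (\<exists>!d. d \<in> hom C (cd e) (dm n) \<and> cp d e = f \<and> cp n d = g)) \<and>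
    (\<forall>h\<in>carr C. \<exists>e\<in>E. \<exists>n\<in>M. dm n = cd e \<and> cp n e = h))"

section \<open>Lax monoidal functors and monoidal transformations\<close>

record ('a,'b,'c,'d) laxf =
  fo :: "'a \<Rightarrow> 'c"
  fm :: "'b \<Rightarrow> 'd"
  lu :: "'d"
  lm :: "'a \<Rightarrow> 'a \<Rightarrow> 'd"

definition is_functor ::
  "('a,'b,'z1) cat_scheme \<Rightarrow> ('c,'d,'z2) cat_scheme \<Rightarrow> ('a \<Rightarrow> 'c) \<Rightarrow> ('b \<Rightarrow> 'd) \<Rightarrow> bool" where
  "is_functor C D Fo Fm \<longleftrightarrow>
    (\<forall>x\<in>cobj C. Fo x \<in> cobj D) \<and>
    (\<forall>f\<in>carr C. Fm f \<in> hom D (Fo (cdom C f)) (Fo (ccod C f))) \<and>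
    (\<forall>x\<in>cobj C. Fm (cid C x) = cid D (Fo x)) \<and>
    (\<forall>f\<in>carr C. \<forall>g\<in>carr C. cdom C g = ccod C f \<longrightarrow>
        Fm (ccomp C g f) = ccomp D (Fm g) (Fm f))"

definition is_lax ::
  "('a,'b,'z1) skewcat_scheme \<Rightarrow> ('c,'d,'z2) skewcat_scheme \<Rightarrow> ('a,'b,'c,'d) laxf \<Rightarrow> bool" where
  "is_lax C D F \<longleftrightarrow>
   (let Fo = fo F; Fm = fm F; u = lu F; \<mu> = lm F; cp = ccomp D; i = cid D; tD = tensm D;
        I = tunit C in
    is_functor C D Fo Fm \<and>
    u \<in> hom D (tunit D) (Fo I) \<and>
    (\<forall>x\<in>cobj C. \<forall>y\<in>cobj C. \<mu> x y \<in> hom D (tens D (Fo x) (Fo y)) (Fo (tens C x y))) \<and>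
    (\<forall>f\<in>carr C. \<forall>g\<in>carr C.
        cp (Fm (tensm C f g)) (\<mu> (cdom C f) (cdom C g))
        = cp (\<mu> (ccod C f) (ccod C g)) (tD (Fm f) (Fm g))) \<and>
    (\<forall>x\<in>cobj C. cp (Fm (lam C x)) (cp (\<mu> I x) (tD u (i (Fo x)))) = lam D (Fo x)) \<and>
    (\<forall>x\<in>cobj C. cp (\<mu> x I) (cp (tD (i (Fo x)) u) (rho D (Fo x))) = Fm (rho C x)) \<and>
    (\<forall>x\<in>cobj C. \<forall>y\<in>cobj C. \<forall>z\<in>cobj C.
        cp (Fm (alph C x y z)) (cp (\<mu> (tens C x y) z) (tD (\<mu> x y) (i (Fo z))))
        = cp (\<mu> x (tens C y z)) (cp (tD (i (Fo x)) (\<mu> y z)) (alph D (Fo x) (Fo y) (Fo z)))))"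

definition is_montrans ::
  "('a,'b,'z1) skewcat_scheme \<Rightarrow> ('c,'d,'z2) skewcat_scheme \<Rightarrow>
   ('a,'b,'c,'d) laxf \<Rightarrow> ('a,'b,'c,'d) laxf \<Rightarrow> ('a \<Rightarrow> 'd) \<Rightarrow> bool" where
  "is_montrans C D F F' \<theta> \<longleftrightarrow>
    (\<forall>x\<in>cobj C. \<theta> x \<in> hom D (fo F x) (fo F' x)) \<and>
    (\<forall>f\<in>carr C. ccomp D (\<theta> (ccod C f)) (fm F f) = ccomp D (fm F' f) (\<theta> (cdom C f))) \<and>
    ccomp D (\<theta> (tunit C)) (lu F) = lu F' \<and>
    (\<forall>x\<in>cobj C. \<forall>y\<in>cobj C.
        ccomp D (\<theta> (tens C x y)) (lm F x y) = ccomp D (lm F' x y) (tensm D (\<theta> x) (\<theta> y)))"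

text \<open>Composite G' . F of lax monoidal functors (F first, then G'), composition taken in C.\<close>
definition lax_comp ::
  "('o,'m,'z) skewcat_scheme \<Rightarrow> ('c,'d,'o,'m) laxf \<Rightarrow> ('a,'b,'c,'d) laxf \<Rightarrow> ('a,'b,'o,'m) laxf" where
  "lax_comp C G' F =
    \<lparr> fo = fo G' \<circ> fo F, fm = fm G' \<circ> fm F,
      lu = ccomp C (fm G' (lu F)) (lu G'),
      lm = (\<lambda>x y. ccomp C (fm G' (lm F x y)) (lm G' (fo F x) (fo F y))) \<rparr>"

section \<open>M-gradings of a monoid and the 2-category Grade_M(T)\<close>

definition is_grading ::
  "('o,'m,'z) skewcat_scheme \<Rightarrow> 'o \<Rightarrow> 'm \<Rightarrow> 'm \<Rightarrow> 'm set \<Rightarrow>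
   ('go,'gm,'z2) skewcat_scheme \<Rightarrow> ('go,'gm,'o,'m) laxf \<Rightarrow> ('go \<Rightarrow> 'm) \<Rightarrow> bool" where
  "is_grading C T e m M Gr G g \<longleftrightarrow>
    is_skew Gr \<and> is_lax Gr C G \<and>
    (\<forall>d\<in>cobj Gr. g d \<in> hom C (fo G d) T \<and> g d \<in> M) \<and>
    (\<forall>f\<in>carr Gr. ccomp C (g (ccod Gr f)) (fm G f) = g (cdom Gr f)) \<and>
    ccomp C (g (tunit Gr)) (lu G) = e \<and>
    (\<forall>d\<in>cobj Gr. \<forall>d'\<in>cobj Gr.
        ccomp C (g (tens Gr d d')) (lm G d d') = ccomp C m (tensm C (g d) (g d')))"

definition is_grading_mor ::
  "('o,'m,'z) skewcat_scheme \<Rightarrow>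
   ('go,'gm,'z2) skewcat_scheme \<Rightarrow> ('go,'gm,'o,'m) laxf \<Rightarrow> ('go \<Rightarrow> 'm) \<Rightarrow>
   ('ho,'hm,'z3) skewcat_scheme \<Rightarrow> ('ho,'hm,'o,'m) laxf \<Rightarrow> ('ho \<Rightarrow> 'm) \<Rightarrow>
   ('go,'gm,'ho,'hm) laxf \<Rightarrow> ('go \<Rightarrow> 'm) \<Rightarrow> bool" where
  "is_grading_mor C Gr G g Gr' G' g' F f \<longleftrightarrow>
    is_lax Gr Gr' F \<and>
    is_montrans Gr C (lax_comp C G' F) G f \<and>
    (\<forall>d\<in>cobj Gr. is_iso C (f d)) \<and>
    (\<forall>d\<in>cobj Gr. ccomp C (g d) (f d) = g' (fo F d))"

definition is_grading_2cell ::
  "('o,'m,'z) skewcat_scheme \<Rightarrow>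
   ('go,'gm,'z2) skewcat_scheme \<Rightarrow> ('ho,'hm,'z3) skewcat_scheme \<Rightarrow> ('ho,'hm,'o,'m) laxf \<Rightarrow>
   ('go,'gm,'ho,'hm) laxf \<Rightarrow> ('go \<Rightarrow> 'm) \<Rightarrow> ('go,'gm,'ho,'hm) laxf \<Rightarrow> ('go \<Rightarrow> 'm) \<Rightarrow>
   ('go \<Rightarrow> 'hm) \<Rightarrow> bool" where
  "is_grading_2cell C Gr Gr' G' F f F' f' \<beta> \<longleftrightarrow>
    is_montrans Gr Gr' F F' \<beta> \<and>
    (\<forall>d\<in>cobj Gr. ccomp C (f' d) (fm G' (\<beta> d)) = f d)"

definition is_inv_grading_2cell ::
  "('o,'m,'z) skewcat_scheme \<Rightarrow>
   ('go,'gm,'z2) skewcat_scheme \<Rightarrow> ('ho,'hm,'z3) skewcat_scheme \<Rightarrow> ('ho,'hm,'o,'m) laxf \<Rightarrow>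
   ('go,'gm,'ho,'hm) laxf \<Rightarrow> ('go \<Rightarrow> 'm) \<Rightarrow> ('go,'gm,'ho,'hm) laxf \<Rightarrow> ('go \<Rightarrow> 'm) \<Rightarrow>
   ('go \<Rightarrow> 'hm) \<Rightarrow> bool" where
  "is_inv_grading_2cell C Gr Gr' G' F f F' f' \<beta> \<longleftrightarrow>
    is_grading_2cell C Gr Gr' G' F f F' f' \<beta> \<and>
    (\<exists>\<beta>'. is_grading_2cell C Gr Gr' G' F' f' F f \<beta>' \<and>
       (\<forall>d\<in>cobj Gr. ccomp Gr' (\<beta>' d) (\<beta> d) = cid Gr' (fo F d) \<and>
                     ccomp Gr' (\<beta> d) (\<beta>' d) = cid Gr' (fo F' d)))"

section \<open>The canonical grading M/T\<close>

definition fact :: "('o,'m,'z) cat_scheme \<Rightarrow> 'm set \<Rightarrow> 'm set \<Rightarrow> 'm \<Rightarrow> 'm \<times> 'm" where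
  "fact C E M h = (SOME (q,n). q \<in> E \<and> n \<in> M \<and> cdom C n = ccod C q \<and> ccomp C n q = h)"

type_synonym ('o,'m) sobj = "'o \<times> 'm"
type_synonym ('o,'m) smor = "('o \<times> 'm) \<times> 'm \<times> ('o \<times> 'm)"

definition sl_obj :: "('o,'m,'z) cat_scheme \<Rightarrow> 'm set \<Rightarrow> 'o \<Rightarrow> ('o,'m) sobj set" where
  "sl_obj C M T = {(S,s). s \<in> M \<and> cdom C s = S \<and> ccod C s = T}"

definition sl_arr :: "('o,'m,'z) cat_scheme \<Rightarrow> 'm set \<Rightarrow> 'o \<Rightarrow> ('o,'m) smor set" where
  "sl_arr C M T = {(x,f,y). x \<in> sl_obj C M T \<and> y \<in> sl_obj C M T \<and>
                          f \<in> hom C (fst x) (fst y) \<and> ccomp C (snd y) f = snd x}"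

definition sl_q :: "('o,'m,'z) cat_scheme \<Rightarrow> 'm set \<Rightarrow> 'm set \<Rightarrow> 'm \<Rightarrow> 'm" where
  "sl_q C E M e = fst (fact C E M e)"

definition sl_unit :: "('o,'m,'z) cat_scheme \<Rightarrow> 'm set \<Rightarrow> 'm set \<Rightarrow> 'm \<Rightarrow> ('o,'m) sobj" where
  "sl_unit C E M e = (ccod C (fst (fact C E M e)), snd (fact C E M e))"

definition sl_qT :: "('o,'m,'z) skewcat_scheme \<Rightarrow> 'm set \<Rightarrow> 'm set \<Rightarrow> 'm \<Rightarrow>
    ('o,'m) sobj \<Rightarrow> ('o,'m) sobj \<Rightarrow> 'm" where
  "sl_qT C E M m x y = fst (fact C E M (ccomp C m (tensm C (snd x) (snd y))))"

definition sl_tens :: "('o,'m,'z) skewcat_scheme \<Rightarrow> 'm set \<Rightarrow> 'm set \<Rightarrow> 'm \<Rightarrow>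
    ('o,'m) sobj \<Rightarrow> ('o,'m) sobj \<Rightarrow> ('o,'m) sobj" where
  "sl_tens C E M m x y =
     (let p = fact C E M (ccomp C m (tensm C (snd x) (snd y))) in (ccod C (fst p), snd p))"

definition sl_tensm :: "('o,'m,'z) skewcat_scheme \<Rightarrow> 'm set \<Rightarrow> 'm set \<Rightarrow> 'm \<Rightarrow>
    ('o,'m) smor \<Rightarrow> ('o,'m) smor \<Rightarrow> ('o,'m) smor" where
  "sl_tensm C E M m u v =
    (let x = fst u; f = fst (snd u); y = snd (snd u);
         x' = fst v; f' = fst (snd v); y' = snd (snd v);
         s = sl_tens C E M m x x'; t = sl_tens C E M m y y' in
     (s, SOME d. d \<in> hom C (fst s) (fst t) \<and>
               ccomp C d (sl_qT C E M m x x') = ccomp C (sl_qT C E M m y y') (tensm C f f') \<and>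
               ccomp C (snd t) d = snd s, t))"

definition sl_lam :: "('o,'m,'z) skewcat_scheme \<Rightarrow> 'm set \<Rightarrow> 'm set \<Rightarrow> 'm \<Rightarrow> 'm \<Rightarrow>
    ('o,'m) sobj \<Rightarrow> ('o,'m) smor" where
  "sl_lam C E M e m x =
    (let U = sl_unit C E M e; s = sl_tens C E M m U x in
     (s, SOME d. d \<in> hom C (fst s) (fst x) \<and>
               ccomp C d (ccomp C (sl_qT C E M m U x) (tensm C (sl_q C E M e) (cid C (fst x))))
                 = lam C (fst x) \<and>
               ccomp C (snd x) d = snd s, x))"

definition sl_rho :: "('o,'m,'z) skewcat_scheme \<Rightarrow> 'm set \<Rightarrow> 'm set \<Rightarrow> 'm \<Rightarrow> 'm \<Rightarrow>
    ('o,'m) sobj \<Rightarrow> ('o,'m) smor" where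
  "sl_rho C E M e m x =
    (let U = sl_unit C E M e in
     (x, ccomp C (sl_qT C E M m x U) (ccomp C (tensm C (cid C (fst x)) (sl_q C E M e)) (rho C (fst x))),
      sl_tens C E M m x U))"

definition sl_alph :: "('o,'m,'z) skewcat_scheme \<Rightarrow> 'm set \<Rightarrow> 'm set \<Rightarrow> 'm \<Rightarrow>
    ('o,'m) sobj \<Rightarrow> ('o,'m) sobj \<Rightarrow> ('o,'m) sobj \<Rightarrow> ('o,'m) smor" where
  "sl_alph C E M m x y z =
    (let tt = sl_tens C E M m; qq = sl_qT C E M m;
         s = tt (tt x y) z; t = tt x (tt y z) in
     (s, SOME d. d \<in> hom C (fst s) (fst t) \<and>
               ccomp C d (ccomp C (qq (tt x y) z) (tensm C (qq x y) (cid C (fst z))))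
                 = ccomp C (qq x (tt y z))
                     (ccomp C (tensm C (cid C (fst x)) (qq y z)) (alph C (fst x) (fst y) (fst z))) \<and>
               ccomp C (snd t) d = snd s, t))"

definition slice_skew :: "('o,'m,'z) skewcat_scheme \<Rightarrow> 'm set \<Rightarrow> 'm set \<Rightarrow> 'o \<Rightarrow> 'm \<Rightarrow> 'm \<Rightarrow>
    (('o,'m) sobj, ('o,'m) smor) skewcat" where
  "slice_skew C E M T e m =
    \<lparr> cobj = sl_obj C M T, carr = sl_arr C M T,
      cdom = (\<lambda>u. fst u), ccod = (\<lambda>u. snd (snd u)),
      cid = (\<lambda>x. (x, cid C (fst x), x)),
      ccomp = (\<lambda>v u. (fst u, ccomp C (fst (snd v)) (fst (snd u)), snd (snd v))),
      tunit = sl_unit C E M e,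
      tens = sl_tens C E M m, tensm = sl_tensm C E M m,
      lam = sl_lam C E M e m, rho = sl_rho C E M e m, alph = sl_alph C E M m \<rparr>"

definition slice_fun :: "('o,'m,'z) skewcat_scheme \<Rightarrow> 'm set \<Rightarrow> 'm set \<Rightarrow> 'm \<Rightarrow> 'm \<Rightarrow>
    (('o,'m) sobj, ('o,'m) smor, 'o, 'm) laxf" where
  "slice_fun C E M e m =
    \<lparr> fo = (\<lambda>x. fst x), fm = (\<lambda>u. fst (snd u)), lu = sl_q C E M e, lm = sl_qT C E M m \<rparr>"

definition slice_tau :: "('o,'m) sobj \<Rightarrow> 'm" where
  "slice_tau x = snd x"

end

theory Submission
  imports Defs
begin

text \<open>
  Every structure map of \<open>M/T\<close> is the unique diagonal of a square whose left side is an
  \<open>E\<close>-map assembled from the chosen factorizations \<open>q\<close> and whose right side is the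
  \<open>M\<close>-map of an object into \<open>T\<close>; the square commutes by the monoid axioms and the
  axioms of \<open>C\<close>. Closure of \<open>E\<close> under \<open>(-) \<otimes> S\<close> is what puts the left sides of the
  squares for the left unitor and the associator into \<open>E\<close>. Equations between arrows of
  \<open>M/T\<close> follow from uniqueness of diagonals: they can be checked after precomposing with
  an \<open>E\<close>-map and postcomposing with the \<open>M\<close>-map to \<open>T\<close>.

  Given a grading \<open>(G, g)\<close>, the assignment \<open>d \<mapsto> (G d, g d)\<close> is a lax monoidal functor into
  \<open>M/T\<close> whose unit and multiplication are again diagonals, and the identity of \<open>G\<close> makes
  it a morphism of gradings. For any other morphism \<open>(H, \<theta>)\<close>, each iso
  \<open>\<theta>\<^sub>d : H d \<rightarrow> G d\<close> commutes with the maps to \<open>T\<close> and so is an isomorphism of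
  \<open>M/T\<close>; these form the invertible 2-cell \<open>(H, \<theta>) \<cong> (F, id)\<close>, which is natural since
  2-cells into \<open>M/T\<close> are determined by their underlying maps in \<open>C\<close>.
\<close>

section \<open>Categories, skew monoidal categories and lax functors\<close>

locale category =
  fixes C :: "('o,'m,'z) cat_scheme"
  assumes is_cat: "is_category C"
begin

abbreviation Ob where "Ob \<equiv> cobj C"
abbreviation Ar where "Ar \<equiv> carr C"
abbreviation dm where "dm \<equiv> cdom C"
abbreviation cd where "cd \<equiv> ccod C"
abbreviation idm where "idm \<equiv> cid C"
abbreviation cp (infixr "\<cdot>" 55) where "g \<cdot> f \<equiv> ccomp C g f"

lemma dom_in_Ob [simp]: "f \<in> Ar \<Longrightarrow> dm f \<in> Ob"
  and cod_in_Ob [simp]: "f \<in> Ar \<Longrightarrow> cd f \<in> Ob"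
  and id_in_Ar [simp]: "a \<in> Ob \<Longrightarrow> idm a \<in> Ar"
  and dom_id [simp]: "a \<in> Ob \<Longrightarrow> dm (idm a) = a"
  and cod_id [simp]: "a \<in> Ob \<Longrightarrow> cd (idm a) = a"
  and comp_in_Ar [simp]: "f \<in> Ar \<Longrightarrow> g \<in> Ar \<Longrightarrow> dm g = cd f \<Longrightarrow> g \<cdot> f \<in> Ar"
  and dom_comp [simp]: "f \<in> Ar \<Longrightarrow> g \<in> Ar \<Longrightarrow> dm g = cd f \<Longrightarrow> dm (g \<cdot> f) = dm f"
  and cod_comp [simp]: "f \<in> Ar \<Longrightarrow> g \<in> Ar \<Longrightarrow> dm g = cd f \<Longrightarrow> cd (g \<cdot> f) = cd g"
  and comp_id_left [simp]: "f \<in> Ar \<Longrightarrow> cd f = a \<Longrightarrow> idm a \<cdot> f = f"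
  and comp_id_right [simp]: "f \<in> Ar \<Longrightarrow> dm f = a \<Longrightarrow> f \<cdot> idm a = f"
  using is_cat unfolding is_category_def hom_def by blast+

lemma comp_assoc [simp]:
  "f \<in> Ar \<Longrightarrow> g \<in> Ar \<Longrightarrow> h \<in> Ar \<Longrightarrow> dm g = cd f \<Longrightarrow> dm h = cd g \<Longrightarrow> (h \<cdot> g) \<cdot> f = h \<cdot> (g \<cdot> f)"
  using is_cat unfolding is_category_def by metis

text \<open>
  Composites are kept right-associated by the simplifier; these variants let an equation
  \<open>a \<cdot> b = c\<close> fire inside a longer composite.
\<close>

lemma comp_eq_assoc:
  "a \<cdot> b = c \<Longrightarrow> a \<in> Ar \<Longrightarrow> b \<in> Ar \<Longrightarrow> k \<in> Ar \<Longrightarrow> dm a = cd b \<Longrightarrow> dm b = cd k \<Longrightarrow>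
    a \<cdot> (b \<cdot> k) = c \<cdot> k"
  by (metis comp_assoc)

lemma comp_eq_assoc3:
  assumes "a \<cdot> (b \<cdot> c) = d" "a \<in> Ar" "b \<in> Ar" "c \<in> Ar" "k \<in> Ar"
    "dm a = cd b" "dm b = cd c" "dm c = cd k"
  shows "a \<cdot> (b \<cdot> (c \<cdot> k)) = d \<cdot> k"
proof -
  have "a \<cdot> (b \<cdot> (c \<cdot> k)) = (a \<cdot> (b \<cdot> c)) \<cdot> k"
    using assms(2-) by simp
  then show ?thesis
    using assms(1) by simp
qed

lemma id_is_iso: "a \<in> Ob \<Longrightarrow> is_iso C (idm a)"
  unfolding is_iso_def hom_def by (intro conjI bexI[of _ "idm a"]) simp_all

definition inv_arr :: "'m \<Rightarrow> 'm" where
  "inv_arr h = (SOME k. k \<in> hom C (cd h) (dm h) \<and> k \<cdot> h = idm (dm h) \<and> h \<cdot> k = idm (cd h))"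

lemma inv_arr:
  assumes "is_iso C h"
  shows "inv_arr h \<in> Ar" "dm (inv_arr h) = cd h" "cd (inv_arr h) = dm h"
    "inv_arr h \<cdot> h = idm (dm h)" "h \<cdot> inv_arr h = idm (cd h)"
proof -
  have "\<exists>k. k \<in> hom C (cd h) (dm h) \<and> k \<cdot> h = idm (dm h) \<and> h \<cdot> k = idm (cd h)"
    using assms unfolding is_iso_def by blast
  then have "inv_arr h \<in> hom C (cd h) (dm h) \<and> inv_arr h \<cdot> h = idm (dm h) \<and> h \<cdot> inv_arr h
      = idm (cd h)"
    unfolding inv_arr_def by (rule someI_ex)
  then show "inv_arr h \<in> Ar" "dm (inv_arr h) = cd h" "cd (inv_arr h) = dm h"
    "inv_arr h \<cdot> h = idm (dm h)" "h \<cdot> inv_arr h = idm (cd h)"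
    unfolding hom_def by simp_all
qed

end

locale skew_monoidal =
  fixes C :: "('o,'m,'z) skewcat_scheme"
  assumes skew: "is_skew C"

lemma is_skew_category: "is_skew C \<Longrightarrow> is_category C"
  unfolding is_skew_def Let_def by blast

sublocale skew_monoidal \<subseteq> category C
  using skew by unfold_locales (rule is_skew_category)

context skew_monoidal
begin

abbreviation unit_ob ("\<I>") where "\<I> \<equiv> tunit C"
abbreviation tn where "tn \<equiv> tens C"
abbreviation tm (infixl "\<otimes>" 60) where "f \<otimes> g \<equiv> tensm C f g"

lemmas skew_axioms = skew[unfolded is_skew_def Let_def hom_def mem_Collect_eq]

lemma unit_in_Ob [simp]: "\<I> \<in> Ob"
  and tens_in_Ob [simp]: "a \<in> Ob \<Longrightarrow> b \<in> Ob \<Longrightarrow> tn a b \<in> Ob"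
  and tensm_in_Ar [simp]: "f \<in> Ar \<Longrightarrow> g \<in> Ar \<Longrightarrow> f \<otimes> g \<in> Ar"
  and dom_tensm [simp]: "f \<in> Ar \<Longrightarrow> g \<in> Ar \<Longrightarrow> dm (f \<otimes> g) = tn (dm f) (dm g)"
  and cod_tensm [simp]: "f \<in> Ar \<Longrightarrow> g \<in> Ar \<Longrightarrow> cd (f \<otimes> g) = tn (cd f) (cd g)"
  and tensm_id [simp]: "a \<in> Ob \<Longrightarrow> b \<in> Ob \<Longrightarrow> idm a \<otimes> idm b = idm (tn a b)"
  and lam_in_Ar [simp]: "a \<in> Ob \<Longrightarrow> lam C a \<in> Ar"
  and dom_lam [simp]: "a \<in> Ob \<Longrightarrow> dm (lam C a) = tn \<I> a"
  and cod_lam [simp]: "a \<in> Ob \<Longrightarrow> cd (lam C a) = a"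
  and rho_in_Ar [simp]: "a \<in> Ob \<Longrightarrow> rho C a \<in> Ar"
  and dom_rho [simp]: "a \<in> Ob \<Longrightarrow> dm (rho C a) = a"
  and cod_rho [simp]: "a \<in> Ob \<Longrightarrow> cd (rho C a) = tn a \<I>"
  and alph_in_Ar [simp]: "a \<in> Ob \<Longrightarrow> b \<in> Ob \<Longrightarrow> c \<in> Ob \<Longrightarrow> alph C a b c \<in> Ar"
  and dom_alph [simp]: "a \<in> Ob \<Longrightarrow> b \<in> Ob \<Longrightarrow> c \<in> Ob \<Longrightarrow> dm (alph C a b c) = tn (tn a b) c"
  and cod_alph [simp]: "a \<in> Ob \<Longrightarrow> b \<in> Ob \<Longrightarrow> c \<in> Ob \<Longrightarrow> cd (alph C a b c) = tn a (tn b c)"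
  using skew_axioms by simp_all

lemma tensm_comp [simp]:
  "f \<in> Ar \<Longrightarrow> g \<in> Ar \<Longrightarrow> f' \<in> Ar \<Longrightarrow> g' \<in> Ar \<Longrightarrow> dm g = cd f \<Longrightarrow> dm g' = cd f' \<Longrightarrow>
    (g \<otimes> g') \<cdot> (f \<otimes> f') = (g \<cdot> f) \<otimes> (g' \<cdot> f')"
  using skew_axioms by simp

lemma tensm_comp_assoc [simp]:
  "f \<in> Ar \<Longrightarrow> g \<in> Ar \<Longrightarrow> f' \<in> Ar \<Longrightarrow> g' \<in> Ar \<Longrightarrow> dm g = cd f \<Longrightarrow> dm g' = cd f' \<Longrightarrow>
    k \<in> Ar \<Longrightarrow> cd k = tn (dm f) (dm f') \<Longrightarrow> (g \<otimes> g') \<cdot> ((f \<otimes> f') \<cdot> k) = ((g \<cdot> f) \<otimes> (g' \<cdot> f')) \<cdot> k"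
  by (subst comp_assoc[symmetric]) simp_all

lemma lam_natural: "f \<in> Ar \<Longrightarrow> b = cd f \<Longrightarrow> lam C b \<cdot> (idm \<I> \<otimes> f) = f \<cdot> lam C (dm f)"
  using skew_axioms by simp

lemma rho_natural: "f \<in> Ar \<Longrightarrow> b = cd f \<Longrightarrow> rho C b \<cdot> f = (f \<otimes> idm \<I>) \<cdot> rho C (dm f)"
  using skew_axioms by simp

lemma alph_natural:
  "f \<in> Ar \<Longrightarrow> g \<in> Ar \<Longrightarrow> h \<in> Ar \<Longrightarrow> a = cd f \<Longrightarrow> b = cd g \<Longrightarrow> c = cd h \<Longrightarrow>
    alph C a b c \<cdot> ((f \<otimes> g) \<otimes> h) = (f \<otimes> (g \<otimes> h)) \<cdot> alph C (dm f) (dm g) (dm h)"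
  using skew_axioms by simp

lemma alph_natural':
  "f \<in> Ar \<Longrightarrow> g \<in> Ar \<Longrightarrow> h \<in> Ar \<Longrightarrow> dm f = a \<Longrightarrow> dm g = b \<Longrightarrow> dm h = c \<Longrightarrow>
    (f \<otimes> (g \<otimes> h)) \<cdot> alph C a b c = alph C (cd f) (cd g) (cd h) \<cdot> ((f \<otimes> g) \<otimes> h)"
  using alph_natural by simp

lemma alph_natural_right:
  "a \<in> Ob \<Longrightarrow> b \<in> Ob \<Longrightarrow> h \<in> Ar \<Longrightarrow> c = cd h \<Longrightarrow>
    alph C a b c \<cdot> (idm (tn a b) \<otimes> h) = (idm a \<otimes> (idm b \<otimes> h)) \<cdot> alph C a b (dm h)"
  using alph_natural[of "idm a" "idm b" h] by simp

lemma lam_rho_unit: "lam C \<I> \<cdot> rho C \<I> = idm \<I>"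
  and triangle: "x \<in> Ob \<Longrightarrow> y \<in> Ob \<Longrightarrow>
    (idm x \<otimes> lam C y) \<cdot> (alph C x \<I> y \<cdot> (rho C x \<otimes> idm y)) = idm (tn x y)"
  and lam_alph: "x \<in> Ob \<Longrightarrow> y \<in> Ob \<Longrightarrow> lam C (tn x y) \<cdot> alph C \<I> x y = lam C x \<otimes> idm y"
  and alph_rho: "x \<in> Ob \<Longrightarrow> y \<in> Ob \<Longrightarrow> alph C x y \<I> \<cdot> rho C (tn x y) = idm x \<otimes> rho C y"
  and pentagon: "x \<in> Ob \<Longrightarrow> y \<in> Ob \<Longrightarrow> z \<in> Ob \<Longrightarrow> w \<in> Ob \<Longrightarrow>
    (idm x \<otimes> alph C y z w) \<cdot> (alph C x (tn y z) w \<cdot> (alph C x y z \<otimes> idm w))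
      = alph C x y (tn z w) \<cdot> alph C (tn x y) z w"
  using skew_axioms by simp_all

end

locale lax_functor =
  fixes A :: "('a,'b,'z1) skewcat_scheme" and B :: "('c,'d,'z2) skewcat_scheme"
    and F :: "('a,'b,'c,'d) laxf"
  assumes lax: "is_lax A B F"
begin

lemmas lax_axioms = lax[unfolded is_lax_def is_functor_def Let_def hom_def mem_Collect_eq]

lemma fo_in_Ob [simp]: "x \<in> cobj A \<Longrightarrow> fo F x \<in> cobj B"
  and fm_in_Ar [simp]: "f \<in> carr A \<Longrightarrow> fm F f \<in> carr B"
  and dom_fm [simp]: "f \<in> carr A \<Longrightarrow> cdom B (fm F f) = fo F (cdom A f)"
  and cod_fm [simp]: "f \<in> carr A \<Longrightarrow> ccod B (fm F f) = fo F (ccod A f)"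
  and fm_id [simp]: "x \<in> cobj A \<Longrightarrow> fm F (cid A x) = cid B (fo F x)"
  and fm_comp: "f \<in> carr A \<Longrightarrow> g \<in> carr A \<Longrightarrow> cdom A g = ccod A f \<Longrightarrow>
    fm F (ccomp A g f) = ccomp B (fm F g) (fm F f)"
  and lu_in_Ar [simp]: "lu F \<in> carr B"
  and dom_lu [simp]: "cdom B (lu F) = tunit B"
  and cod_lu [simp]: "ccod B (lu F) = fo F (tunit A)"
  and lm_in_Ar [simp]: "x \<in> cobj A \<Longrightarrow> y \<in> cobj A \<Longrightarrow> lm F x y \<in> carr B"
  and dom_lm [simp]: "x \<in> cobj A \<Longrightarrow> y \<in> cobj A \<Longrightarrow> cdom B (lm F x y) = tens B (fo F x) (fo F y)"
  and cod_lm [simp]: "x \<in> cobj A \<Longrightarrow> y \<in> cobj A \<Longrightarrow> ccod B (lm F x y) = fo F (tens A x y)"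
  using lax_axioms by simp_all

lemma lm_natural: "f \<in> carr A \<Longrightarrow> g \<in> carr A \<Longrightarrow>
    ccomp B (fm F (tensm A f g)) (lm F (cdom A f) (cdom A g))
      = ccomp B (lm F (ccod A f) (ccod A g)) (tensm B (fm F f) (fm F g))"
  and lax_left_unit: "x \<in> cobj A \<Longrightarrow>
    ccomp B (fm F (lam A x)) (ccomp B (lm F (tunit A) x) (tensm B (lu F) (cid B (fo F x))))
      = lam B (fo F x)"
  and lax_right_unit: "x \<in> cobj A \<Longrightarrow>
    ccomp B (lm F x (tunit A)) (ccomp B (tensm B (cid B (fo F x)) (lu F)) (rho B (fo F x)))
      = fm F (rho A x)"
  and lax_assoc: "x \<in> cobj A \<Longrightarrow> y \<in> cobj A \<Longrightarrow> z \<in> cobj A \<Longrightarrow>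
    ccomp B (fm F (alph A x y z))
        (ccomp B (lm F (tens A x y) z) (tensm B (lm F x y) (cid B (fo F z))))
      = ccomp B (lm F x (tens A y z))
          (ccomp B (tensm B (cid B (fo F x)) (lm F y z)) (alph B (fo F x) (fo F y) (fo F z)))"
  using lax_axioms by simp_all

end

section \<open>Orthogonal factorization systems\<close>

locale factorization_system = category C for C :: "('o,'m,'z) cat_scheme" +
  fixes E M :: "'m set"
  assumes ofs: "is_ofs C E M"
begin

lemmas ofs_axioms = ofs[unfolded is_ofs_def Let_def]

lemma E_in_Ar [simp]: "h \<in> E \<Longrightarrow> h \<in> Ar"
  and M_in_Ar [simp]: "h \<in> M \<Longrightarrow> h \<in> Ar"
  and E_comp [simp]: "f \<in> E \<Longrightarrow> g \<in> E \<Longrightarrow> dm g = cd f \<Longrightarrow> g \<cdot> f \<in> E"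
  using ofs_axioms by (simp_all add: subset_iff)

lemma diagonal_ex1:
  "p \<in> E \<Longrightarrow> n \<in> M \<Longrightarrow> f \<in> Ar \<Longrightarrow> g \<in> Ar \<Longrightarrow>
    dm f = dm p \<Longrightarrow> cd f = dm n \<Longrightarrow> dm g = cd p \<Longrightarrow> cd g = cd n \<Longrightarrow> g \<cdot> p = n \<cdot> f \<Longrightarrow>
    \<exists>!d. d \<in> hom C (cd p) (dm n) \<and> d \<cdot> p = f \<and> n \<cdot> d = g"
  using ofs_axioms by simp

lemma factorization_ex: "h \<in> Ar \<Longrightarrow> \<exists>p\<in>E. \<exists>n\<in>M. dm n = cd p \<and> n \<cdot> p = h"
  using ofs_axioms by blast

lemma EM_cancel:
  assumes "p \<in> E" "n \<in> M" "d1 \<in> Ar" "d2 \<in> Ar" "dm d1 = cd p" "dm d2 = cd p"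
    "cd d1 = dm n" "cd d2 = dm n" "d1 \<cdot> p = d2 \<cdot> p" "n \<cdot> d1 = n \<cdot> d2"
  shows "d1 = d2"
proof -
  have "\<exists>!d. d \<in> hom C (cd p) (dm n) \<and> d \<cdot> p = d1 \<cdot> p \<and> n \<cdot> d = n \<cdot> d1"
    by (rule diagonal_ex1) (use assms in simp_all)
  moreover have "d1 \<in> hom C (cd p) (dm n)" "d2 \<in> hom C (cd p) (dm n)"
    using assms unfolding hom_def by simp_all
  ultimately show ?thesis
    using assms by metis
qed

lemma diagonal_some:
  assumes "p \<in> E" "n \<in> M" "f \<in> Ar" "g \<in> Ar"
    "dm f = dm p" "cd f = dm n" "dm g = cd p" "cd g = cd n" "g \<cdot> p = n \<cdot> f"
    "A = cd p" "B = dm n"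
  defines "d \<equiv> SOME d. d \<in> hom C A B \<and> d \<cdot> p = f \<and> n \<cdot> d = g"
  shows "d \<in> hom C A B \<and> d \<cdot> p = f \<and> n \<cdot> d = g"
proof -
  have "\<exists>!d. d \<in> hom C (cd p) (dm n) \<and> d \<cdot> p = f \<and> n \<cdot> d = g"
    by (rule diagonal_ex1) (use assms in simp_all)
  then show ?thesis
    unfolding d_def using assms by (metis (mono_tags, lifting) someI_ex)
qed

lemma fact:
  assumes "h \<in> Ar"
  shows "fst (fact C E M h) \<in> E" "snd (fact C E M h) \<in> M"
    "dm (snd (fact C E M h)) = cd (fst (fact C E M h))"
    "snd (fact C E M h) \<cdot> fst (fact C E M h) = h"
    "dm (fst (fact C E M h)) = dm h" "cd (snd (fact C E M h)) = cd h"
proof -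
  have "\<exists>p. case p of (q, n) \<Rightarrow> q \<in> E \<and> n \<in> M \<and> dm n = cd q \<and> n \<cdot> q = h"
    using factorization_ex[OF assms] by auto
  then have "case fact C E M h of (q, n) \<Rightarrow> q \<in> E \<and> n \<in> M \<and> dm n = cd q \<and> n \<cdot> q = h"
    unfolding fact_def by (rule someI_ex)
  then show q: "fst (fact C E M h) \<in> E" "snd (fact C E M h) \<in> M"
    "dm (snd (fact C E M h)) = cd (fst (fact C E M h))"
    "snd (fact C E M h) \<cdot> fst (fact C E M h) = h"
    by (auto split: prod.splits)
  show "dm (fst (fact C E M h)) = dm h" "cd (snd (fact C E M h)) = cd h"
    using q dom_comp cod_comp by (metis E_in_Ar M_in_Ar)+
qed

end

section \<open>The skew monoidal category \<open>M/T\<close>\<close>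

locale monoid_slice = skew_monoidal C + factorization_system C E M
  for C :: "('o,'m,'z) skewcat_scheme" and E M :: "'m set" +
  fixes T :: 'o and e m :: 'm
  assumes monoid: "is_monoid C T e m"
    and E_tensor_closed: "\<forall>x\<in>sl_obj C M T. \<forall>h\<in>E. tensm C h (cid C (fst x)) \<in> E"
begin

abbreviation "SOb \<equiv> sl_obj C M T"
abbreviation "SAr \<equiv> sl_arr C M T"
abbreviation "J \<equiv> sl_unit C E M e"
abbreviation "qJ \<equiv> sl_q C E M e"
abbreviation "qT \<equiv> sl_qT C E M m"
abbreviation box (infix "\<boxdot>" 65) where "x \<boxdot> y \<equiv> sl_tens C E M m x y"

lemmas monoid_unfolded = monoid[unfolded is_monoid_def Let_def hom_def mem_Collect_eq]

lemma T_in_Ob [simp]: "T \<in> Ob"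
  and e_in_Ar [simp]: "e \<in> Ar" and dom_e [simp]: "dm e = \<I>" and cod_e [simp]: "cd e = T"
  and m_in_Ar [simp]: "m \<in> Ar" and dom_m [simp]: "dm m = tn T T" and cod_m [simp]: "cd m = T"
  and monoid_left_unit: "m \<cdot> (e \<otimes> idm T) = lam C T"
  and monoid_right_unit: "m \<cdot> ((idm T \<otimes> e) \<cdot> rho C T) = idm T"
  and monoid_assoc: "m \<cdot> (m \<otimes> idm T) = m \<cdot> ((idm T \<otimes> m) \<cdot> alph C T T T)"
  using monoid_unfolded by simp_all

lemma SOb_iff: "x \<in> SOb \<longleftrightarrow> snd x \<in> M \<and> dm (snd x) = fst x \<and> cd (snd x) = T"
  unfolding sl_obj_def by (cases x) auto

lemma SOb_snd_in_M [simp]: "x \<in> SOb \<Longrightarrow> snd x \<in> M"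
  and SOb_snd_in_Ar [simp]: "x \<in> SOb \<Longrightarrow> snd x \<in> Ar"
  and SOb_dom_snd [simp]: "x \<in> SOb \<Longrightarrow> dm (snd x) = fst x"
  and SOb_cod_snd [simp]: "x \<in> SOb \<Longrightarrow> cd (snd x) = T"
  and SOb_fst_in_Ob [simp]: "x \<in> SOb \<Longrightarrow> fst x \<in> Ob"
  using SOb_iff dom_in_Ob[of "snd x"] by auto

lemma box_factorization [simp]:
  assumes "x \<in> SOb" "y \<in> SOb"
  shows "qT x y \<in> E" "x \<boxdot> y \<in> SOb" "dm (qT x y) = tn (fst x) (fst y)" "cd (qT x y) = fst (x \<boxdot> y)"
    "snd (x \<boxdot> y) \<cdot> qT x y = m \<cdot> (snd x \<otimes> snd y)"
proof -
  let ?h = "m \<cdot> (snd x \<otimes> snd y)"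
  have h: "?h \<in> Ar" "dm ?h = tn (fst x) (fst y)" "cd ?h = T"
    using assms by simp_all
  have box_eq: "x \<boxdot> y = (cd (fst (fact C E M ?h)), snd (fact C E M ?h))"
    unfolding sl_tens_def Let_def by simp
  have qT_eq: "qT x y = fst (fact C E M ?h)"
    unfolding sl_qT_def by simp
  show "qT x y \<in> E" "dm (qT x y) = tn (fst x) (fst y)" "cd (qT x y) = fst (x \<boxdot> y)"
    "snd (x \<boxdot> y) \<cdot> qT x y = m \<cdot> (snd x \<otimes> snd y)" "x \<boxdot> y \<in> SOb"
    unfolding qT_eq box_eq SOb_iff using fact[OF h(1)] h by simp_all
qed

lemma unit_factorization [simp]: "qJ \<in> E" "J \<in> SOb" "dm qJ = \<I>" "cd qJ = fst J" "snd J \<cdot> qJ = e"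
proof -
  have J_eq: "J = (cd (fst (fact C E M e)), snd (fact C E M e))"
    unfolding sl_unit_def by simp
  have qJ_eq: "qJ = fst (fact C E M e)"
    unfolding sl_q_def by simp
  show "qJ \<in> E" "J \<in> SOb" "dm qJ = \<I>" "cd qJ = fst J" "snd J \<cdot> qJ = e"
    unfolding qJ_eq J_eq SOb_iff using fact[OF e_in_Ar] by simp_all
qed

lemmas box_factorization_assoc [simp] = comp_eq_assoc[OF box_factorization(5)]
lemmas unit_factorization_assoc [simp] = comp_eq_assoc[OF unit_factorization(5)]

text \<open>The closure hypothesis on \<open>E\<close> enters only through this lemma.\<close>

lemma E_tensor_closed_SOb [simp]: "x \<in> SOb \<Longrightarrow> h \<in> E \<Longrightarrow> h \<otimes> idm (fst x) \<in> E"
  using E_tensor_closed by blast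

lemma SAr_iff: "u \<in> SAr \<longleftrightarrow> fst u \<in> SOb \<and> snd (snd u) \<in> SOb \<and> fst (snd u) \<in> Ar \<and>
    dm (fst (snd u)) = fst (fst u) \<and> cd (fst (snd u)) = fst (snd (snd u)) \<and>
    snd (snd (snd u)) \<cdot> fst (snd u) = snd (fst u)"
  unfolding sl_arr_def hom_def by (cases u) auto

lemma SAr_triple_iff: "(x, f, y) \<in> SAr \<longleftrightarrow>
    x \<in> SOb \<and> y \<in> SOb \<and> f \<in> Ar \<and> dm f = fst x \<and> cd f = fst y \<and> snd y \<cdot> f = snd x"
  unfolding SAr_iff by simp

lemma SAr_I: "x \<in> SOb \<Longrightarrow> y \<in> SOb \<Longrightarrow> f \<in> Ar \<Longrightarrow> dm f = fst x \<Longrightarrow> cd f = fst y \<Longrightarrow>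
    snd y \<cdot> f = snd x \<Longrightarrow> (x, f, y) \<in> SAr"
  unfolding SAr_triple_iff by simp

lemma SAr_D:
  assumes "(x, f, y) \<in> SAr"
  shows "x \<in> SOb" "y \<in> SOb" "f \<in> Ar" "dm f = fst x" "cd f = fst y" "snd y \<cdot> f = snd x"
  using assms unfolding SAr_triple_iff by auto

lemma id_in_SAr [simp]: "x \<in> SOb \<Longrightarrow> (x, idm (fst x), x) \<in> SAr"
  by (intro SAr_I) simp_all

lemma comp_in_SAr [simp]:
  assumes "(x, f, y) \<in> SAr" "(y, g, z) \<in> SAr"
  shows "(x, g \<cdot> f, z) \<in> SAr"
proof -
  note a = SAr_D[OF assms(1)] SAr_D[OF assms(2)]
  have "snd z \<cdot> (g \<cdot> f) = (snd z \<cdot> g) \<cdot> f"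
    using a(1-5,7-11) by simp
  also have "\<dots> = snd x"
    using a by simp
  finally show ?thesis
    using a by (intro SAr_I) simp_all
qed

definition boxm ::
  "('o,'m) sobj \<Rightarrow> 'm \<Rightarrow> ('o,'m) sobj \<Rightarrow> ('o,'m) sobj \<Rightarrow> 'm \<Rightarrow> ('o,'m) sobj \<Rightarrow> 'm" where
  "boxm x f y x' f' y' = fst (snd (sl_tensm C E M m (x, f, y) (x', f', y')))"

lemma boxm_spec:
  assumes "(x, f, y) \<in> SAr" "(x', f', y') \<in> SAr"
  shows "sl_tensm C E M m (x, f, y) (x', f', y') = (x \<boxdot> x', boxm x f y x' f' y', y \<boxdot> y')"
    "boxm x f y x' f' y' \<in> Ar" "dm (boxm x f y x' f' y') = fst (x \<boxdot> x')"
    "cd (boxm x f y x' f' y') = fst (y \<boxdot> y')"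
    "boxm x f y x' f' y' \<cdot> qT x x' = qT y y' \<cdot> (f \<otimes> f')"
    "snd (y \<boxdot> y') \<cdot> boxm x f y x' f' y' = snd (x \<boxdot> x')"
proof -
  note a = SAr_D[OF assms(1)] SAr_D[OF assms(2)]
  define d where "d = (SOME d. d \<in> hom C (fst (x \<boxdot> x')) (fst (y \<boxdot> y')) \<and>
    d \<cdot> qT x x' = qT y y' \<cdot> (f \<otimes> f') \<and> snd (y \<boxdot> y') \<cdot> d = snd (x \<boxdot> x'))"
  have D: "sl_tensm C E M m (x, f, y) (x', f', y') = (x \<boxdot> x', d, y \<boxdot> y')"
    unfolding sl_tensm_def Let_def d_def by simp
  have eq: "snd (x \<boxdot> x') \<cdot> qT x x' = snd (y \<boxdot> y') \<cdot> (qT y y' \<cdot> (f \<otimes> f'))"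
    using a by simp
  have "d \<in> hom C (fst (x \<boxdot> x')) (fst (y \<boxdot> y')) \<and>
      d \<cdot> qT x x' = qT y y' \<cdot> (f \<otimes> f') \<and> snd (y \<boxdot> y') \<cdot> d = snd (x \<boxdot> x')"
    unfolding d_def by (rule diagonal_some) (use a eq in simp_all)
  then show "sl_tensm C E M m (x, f, y) (x', f', y') = (x \<boxdot> x', boxm x f y x' f' y', y \<boxdot> y')"
    "boxm x f y x' f' y' \<in> Ar" "dm (boxm x f y x' f' y') = fst (x \<boxdot> x')"
    "cd (boxm x f y x' f' y') = fst (y \<boxdot> y')"
    "boxm x f y x' f' y' \<cdot> qT x x' = qT y y' \<cdot> (f \<otimes> f')"
    "snd (y \<boxdot> y') \<cdot> boxm x f y x' f' y' = snd (x \<boxdot> x')"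
    unfolding boxm_def D by (simp_all add: hom_def)
qed

lemma boxm_in_Ar [simp]: "(x, f, y) \<in> SAr \<Longrightarrow> (x', f', y') \<in> SAr \<Longrightarrow> boxm x f y x' f' y' \<in> Ar"
  and dom_boxm [simp]: "(x, f, y) \<in> SAr \<Longrightarrow> (x', f', y') \<in> SAr \<Longrightarrow>
    dm (boxm x f y x' f' y') = fst (x \<boxdot> x')"
  and cod_boxm [simp]: "(x, f, y) \<in> SAr \<Longrightarrow> (x', f', y') \<in> SAr \<Longrightarrow>
    cd (boxm x f y x' f' y') = fst (y \<boxdot> y')"
  and boxm_qT [simp]: "(x, f, y) \<in> SAr \<Longrightarrow> (x', f', y') \<in> SAr \<Longrightarrow>
    boxm x f y x' f' y' \<cdot> qT x x' = qT y y' \<cdot> (f \<otimes> f')"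
  and boxm_snd [simp]: "(x, f, y) \<in> SAr \<Longrightarrow> (x', f', y') \<in> SAr \<Longrightarrow>
    snd (y \<boxdot> y') \<cdot> boxm x f y x' f' y' = snd (x \<boxdot> x')"
  by (simp_all add: boxm_spec)

lemmas boxm_qT_assoc [simp] = comp_eq_assoc[OF boxm_qT]
lemmas boxm_snd_assoc [simp] = comp_eq_assoc[OF boxm_snd]

lemma boxm_in_SAr [simp]:
  "(x, f, y) \<in> SAr \<Longrightarrow> (x', f', y') \<in> SAr \<Longrightarrow> (x \<boxdot> x', boxm x f y x' f' y', y \<boxdot> y') \<in> SAr"
  by (intro SAr_I) (simp_all add: SAr_triple_iff)

definition lS :: "('o,'m) sobj \<Rightarrow> 'm" where
  "lS x = fst (snd (sl_lam C E M e m x))"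

lemma lS_spec:
  assumes x: "x \<in> SOb"
  shows "sl_lam C E M e m x = (J \<boxdot> x, lS x, x)" "lS x \<in> Ar" "dm (lS x) = fst (J \<boxdot> x)"
    "cd (lS x) = fst x" "lS x \<cdot> (qT J x \<cdot> (qJ \<otimes> idm (fst x))) = lam C (fst x)"
    "snd x \<cdot> lS x = snd (J \<boxdot> x)"
proof -
  define d where "d = (SOME d. d \<in> hom C (fst (J \<boxdot> x)) (fst x) \<and>
    d \<cdot> (qT J x \<cdot> (qJ \<otimes> idm (fst x))) = lam C (fst x) \<and> snd x \<cdot> d = snd (J \<boxdot> x))"
  have D: "sl_lam C E M e m x = (J \<boxdot> x, d, x)"
    unfolding sl_lam_def Let_def d_def by simp
  have "snd x \<cdot> lam C (fst x) = lam C T \<cdot> (idm \<I> \<otimes> snd x)"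
    using lam_natural[of "snd x" T] x by simp
  also have "\<dots> = (m \<cdot> (e \<otimes> idm T)) \<cdot> (idm \<I> \<otimes> snd x)"
    by (simp add: monoid_left_unit)
  also have "\<dots> = snd (J \<boxdot> x) \<cdot> (qT J x \<cdot> (qJ \<otimes> idm (fst x)))"
    using x by simp
  finally have eq: "snd (J \<boxdot> x) \<cdot> (qT J x \<cdot> (qJ \<otimes> idm (fst x))) = snd x \<cdot> lam C (fst x)" ..
  have "d \<in> hom C (fst (J \<boxdot> x)) (fst x) \<and>
      d \<cdot> (qT J x \<cdot> (qJ \<otimes> idm (fst x))) = lam C (fst x) \<and> snd x \<cdot> d = snd (J \<boxdot> x)"
    unfolding d_def by (rule diagonal_some) (use x eq in simp_all)
  then show "sl_lam C E M e m x = (J \<boxdot> x, lS x, x)" "lS x \<in> Ar" "dm (lS x) = fst (J \<boxdot> x)"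
    "cd (lS x) = fst x" "lS x \<cdot> (qT J x \<cdot> (qJ \<otimes> idm (fst x))) = lam C (fst x)"
    "snd x \<cdot> lS x = snd (J \<boxdot> x)"
    unfolding lS_def D by (simp_all add: hom_def)
qed

definition rS :: "('o,'m) sobj \<Rightarrow> 'm" where
  "rS x = qT x J \<cdot> ((idm (fst x) \<otimes> qJ) \<cdot> rho C (fst x))"

lemma rS_spec:
  assumes x: "x \<in> SOb"
  shows "sl_rho C E M e m x = (x, rS x, x \<boxdot> J)" "rS x \<in> Ar" "dm (rS x) = fst x"
    "cd (rS x) = fst (x \<boxdot> J)" "snd (x \<boxdot> J) \<cdot> rS x = snd x"
proof -
  show "sl_rho C E M e m x = (x, rS x, x \<boxdot> J)"
    unfolding sl_rho_def rS_def Let_def by simp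
  show "rS x \<in> Ar" "dm (rS x) = fst x" "cd (rS x) = fst (x \<boxdot> J)"
    unfolding rS_def using x by simp_all
  have "snd (x \<boxdot> J) \<cdot> rS x = (m \<cdot> (idm T \<otimes> e)) \<cdot> ((snd x \<otimes> idm \<I>) \<cdot> rho C (fst x))"
    unfolding rS_def using x by simp
  also have "\<dots> = (m \<cdot> (idm T \<otimes> e)) \<cdot> (rho C T \<cdot> snd x)"
    using x by (simp add: rho_natural)
  also have "\<dots> = (m \<cdot> ((idm T \<otimes> e) \<cdot> rho C T)) \<cdot> snd x"
    using x by simp
  also have "\<dots> = snd x"
    using x by (simp add: monoid_right_unit)
  finally show "snd (x \<boxdot> J) \<cdot> rS x = snd x" .
qed

definition aS :: "('o,'m) sobj \<Rightarrow> ('o,'m) sobj \<Rightarrow> ('o,'m) sobj \<Rightarrow> 'm" where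
  "aS x y z = fst (snd (sl_alph C E M m x y z))"

lemma aS_spec:
  assumes x: "x \<in> SOb" and y: "y \<in> SOb" and z: "z \<in> SOb"
  shows "sl_alph C E M m x y z = ((x \<boxdot> y) \<boxdot> z, aS x y z, x \<boxdot> (y \<boxdot> z))" "aS x y z \<in> Ar"
    "dm (aS x y z) = fst ((x \<boxdot> y) \<boxdot> z)" "cd (aS x y z) = fst (x \<boxdot> (y \<boxdot> z))"
    "aS x y z \<cdot> (qT (x \<boxdot> y) z \<cdot> (qT x y \<otimes> idm (fst z)))
      = qT x (y \<boxdot> z) \<cdot> ((idm (fst x) \<otimes> qT y z) \<cdot> alph C (fst x) (fst y) (fst z))"
    "snd (x \<boxdot> (y \<boxdot> z)) \<cdot> aS x y z = snd ((x \<boxdot> y) \<boxdot> z)"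
proof -
  define d where "d = (SOME d. d \<in> hom C (fst ((x \<boxdot> y) \<boxdot> z)) (fst (x \<boxdot> (y \<boxdot> z))) \<and>
    d \<cdot> (qT (x \<boxdot> y) z \<cdot> (qT x y \<otimes> idm (fst z)))
      = qT x (y \<boxdot> z) \<cdot> ((idm (fst x) \<otimes> qT y z) \<cdot> alph C (fst x) (fst y) (fst z)) \<and>
    snd (x \<boxdot> (y \<boxdot> z)) \<cdot> d = snd ((x \<boxdot> y) \<boxdot> z))"
  have D: "sl_alph C E M m x y z = ((x \<boxdot> y) \<boxdot> z, d, x \<boxdot> (y \<boxdot> z))"
    unfolding sl_alph_def Let_def d_def by simp
  have "snd ((x \<boxdot> y) \<boxdot> z) \<cdot> (qT (x \<boxdot> y) z \<cdot> (qT x y \<otimes> idm (fst z)))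
      = (m \<cdot> (m \<otimes> idm T)) \<cdot> ((snd x \<otimes> snd y) \<otimes> snd z)"
    using x y z by simp
  also have "\<dots> = (m \<cdot> ((idm T \<otimes> m) \<cdot> alph C T T T)) \<cdot> ((snd x \<otimes> snd y) \<otimes> snd z)"
    by (simp only: monoid_assoc)
  also have "\<dots> = m \<cdot> ((idm T \<otimes> m) \<cdot> (alph C T T T \<cdot> ((snd x \<otimes> snd y) \<otimes> snd z)))"
    using x y z by simp
  also have "\<dots> = m \<cdot> ((idm T \<otimes> m) \<cdot> ((snd x \<otimes> (snd y \<otimes> snd z)) \<cdot> alph C (fst x) (fst y) (fst z)))"
    using alph_natural'[of "snd x" "snd y" "snd z"] x y z by simp
  also have "\<dots> = snd (x \<boxdot> (y \<boxdot> z))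
      \<cdot> (qT x (y \<boxdot> z) \<cdot> ((idm (fst x) \<otimes> qT y z) \<cdot> alph C (fst x) (fst y) (fst z)))"
    using x y z by simp
  finally have eq: "snd ((x \<boxdot> y) \<boxdot> z) \<cdot> (qT (x \<boxdot> y) z \<cdot> (qT x y \<otimes> idm (fst z)))
      = snd (x \<boxdot> (y \<boxdot> z))
        \<cdot> (qT x (y \<boxdot> z) \<cdot> ((idm (fst x) \<otimes> qT y z) \<cdot> alph C (fst x) (fst y) (fst z)))" .
  have "d \<in> hom C (fst ((x \<boxdot> y) \<boxdot> z)) (fst (x \<boxdot> (y \<boxdot> z))) \<and>
      d \<cdot> (qT (x \<boxdot> y) z \<cdot> (qT x y \<otimes> idm (fst z)))
        = qT x (y \<boxdot> z) \<cdot> ((idm (fst x) \<otimes> qT y z) \<cdot> alph C (fst x) (fst y) (fst z)) \<and>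
      snd (x \<boxdot> (y \<boxdot> z)) \<cdot> d = snd ((x \<boxdot> y) \<boxdot> z)"
    unfolding d_def by (rule diagonal_some) (use x y z eq in simp_all)
  then show "sl_alph C E M m x y z = ((x \<boxdot> y) \<boxdot> z, aS x y z, x \<boxdot> (y \<boxdot> z))" "aS x y z \<in> Ar"
    "dm (aS x y z) = fst ((x \<boxdot> y) \<boxdot> z)" "cd (aS x y z) = fst (x \<boxdot> (y \<boxdot> z))"
    "aS x y z \<cdot> (qT (x \<boxdot> y) z \<cdot> (qT x y \<otimes> idm (fst z)))
      = qT x (y \<boxdot> z) \<cdot> ((idm (fst x) \<otimes> qT y z) \<cdot> alph C (fst x) (fst y) (fst z))"
    "snd (x \<boxdot> (y \<boxdot> z)) \<cdot> aS x y z = snd ((x \<boxdot> y) \<boxdot> z)"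
    unfolding aS_def D by (simp_all add: hom_def)
qed

lemma slice_arr_eqI:
  assumes "d1 \<cdot> p = d2 \<cdot> p" "p \<in> E" "cd p = fst X" "X \<in> SOb" "Y \<in> SOb"
    "d1 \<in> Ar" "d2 \<in> Ar" "dm d1 = fst X" "dm d2 = fst X" "cd d1 = fst Y" "cd d2 = fst Y"
    "snd Y \<cdot> d1 = snd Y \<cdot> d2"
  shows "d1 = d2"
  by (rule EM_cancel[of p "snd Y"]) (use assms in simp_all)

lemma lS_in_Ar [simp]: "x \<in> SOb \<Longrightarrow> lS x \<in> Ar"
  and dom_lS [simp]: "x \<in> SOb \<Longrightarrow> dm (lS x) = fst (J \<boxdot> x)"
  and cod_lS [simp]: "x \<in> SOb \<Longrightarrow> cd (lS x) = fst x"
  and lS_snd [simp]: "x \<in> SOb \<Longrightarrow> snd x \<cdot> lS x = snd (J \<boxdot> x)"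
  by (simp_all add: lS_spec)

lemmas lS_snd_assoc [simp] = comp_eq_assoc[OF lS_snd]

lemma lS_qT [simp]:
  assumes "y \<in> SOb" "h \<in> Ar" "cd h = fst y"
  shows "lS y \<cdot> (qT J y \<cdot> (qJ \<otimes> h)) = lam C (fst y) \<cdot> (idm \<I> \<otimes> h)"
proof -
  have "lS y \<cdot> (qT J y \<cdot> (qJ \<otimes> h)) = (lS y \<cdot> (qT J y \<cdot> (qJ \<otimes> idm (fst y)))) \<cdot> (idm \<I> \<otimes> h)"
    using assms by simp
  then show ?thesis
    using assms by (simp add: lS_spec(5))
qed

lemmas lS_qT_assoc [simp] = comp_eq_assoc3[OF lS_qT]

lemma rS_in_Ar [simp]: "x \<in> SOb \<Longrightarrow> rS x \<in> Ar"
  and dom_rS [simp]: "x \<in> SOb \<Longrightarrow> dm (rS x) = fst x"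
  and cod_rS [simp]: "x \<in> SOb \<Longrightarrow> cd (rS x) = fst (x \<boxdot> J)"
  and rS_snd [simp]: "x \<in> SOb \<Longrightarrow> snd (x \<boxdot> J) \<cdot> rS x = snd x"
  by (simp_all add: rS_spec)

lemmas rS_snd_assoc [simp] = comp_eq_assoc[OF rS_snd]

lemma aS_in_Ar [simp]: "x \<in> SOb \<Longrightarrow> y \<in> SOb \<Longrightarrow> z \<in> SOb \<Longrightarrow> aS x y z \<in> Ar"
  and dom_aS [simp]: "x \<in> SOb \<Longrightarrow> y \<in> SOb \<Longrightarrow> z \<in> SOb \<Longrightarrow> dm (aS x y z) = fst ((x \<boxdot> y) \<boxdot> z)"
  and cod_aS [simp]: "x \<in> SOb \<Longrightarrow> y \<in> SOb \<Longrightarrow> z \<in> SOb \<Longrightarrow> cd (aS x y z) = fst (x \<boxdot> (y \<boxdot> z))"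
  and aS_snd [simp]: "x \<in> SOb \<Longrightarrow> y \<in> SOb \<Longrightarrow> z \<in> SOb \<Longrightarrow>
    snd (x \<boxdot> (y \<boxdot> z)) \<cdot> aS x y z = snd ((x \<boxdot> y) \<boxdot> z)"
  by (simp_all add: aS_spec)

lemmas aS_snd_assoc [simp] = comp_eq_assoc[OF aS_snd]
lemmas aS_qT = aS_spec(5)

lemma lS_in_SAr [simp]: "x \<in> SOb \<Longrightarrow> (J \<boxdot> x, lS x, x) \<in> SAr"
  and rS_in_SAr [simp]: "x \<in> SOb \<Longrightarrow> (x, rS x, x \<boxdot> J) \<in> SAr"
  and aS_in_SAr [simp]: "x \<in> SOb \<Longrightarrow> y \<in> SOb \<Longrightarrow> z \<in> SOb \<Longrightarrow>
    ((x \<boxdot> y) \<boxdot> z, aS x y z, x \<boxdot> (y \<boxdot> z)) \<in> SAr"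
  by (intro SAr_I; simp)+

lemma boxm_id: "x \<in> SOb \<Longrightarrow> y \<in> SOb \<Longrightarrow> boxm x (idm (fst x)) x y (idm (fst y)) y = idm (fst (x \<boxdot> y))"
  by (rule slice_arr_eqI[where X = "x \<boxdot> y" and Y = "x \<boxdot> y" and p = "qT x y"]) simp_all

lemma boxm_comp:
  assumes u: "(x, f, y) \<in> SAr" "(y, g, z) \<in> SAr" and v: "(x', f', y') \<in> SAr" "(y', g', z') \<in> SAr"
  shows "boxm x (g \<cdot> f) z x' (g' \<cdot> f') z' = boxm y g z y' g' z' \<cdot> boxm x f y x' f' y'"
proof -
  note a = SAr_D[OF u(1)] SAr_D[OF u(2)] SAr_D[OF v(1)] SAr_D[OF v(2)]
  have c1: "(x, g \<cdot> f, z) \<in> SAr" "(x', g' \<cdot> f', z') \<in> SAr" using u v by simp_all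
  show ?thesis
    by (rule slice_arr_eqI[where X = "x \<boxdot> x'" and Y = "z \<boxdot> z'" and p = "qT x x'"])
        (use a c1 u v in simp_all)
qed

lemma sl_tensm_comp:
  assumes "(x, f, y) \<in> SAr" "(y, g, z) \<in> SAr" "(x', f', y') \<in> SAr" "(y', g', z') \<in> SAr"
  shows "sl_tensm C E M m (x, g \<cdot> f, z) (x', g' \<cdot> f', z')
    = (x \<boxdot> x', boxm y g z y' g' z' \<cdot> boxm x f y x' f' y', z \<boxdot> z')"
  using boxm_comp[OF assms] boxm_spec(1) comp_in_SAr assms by simp

lemma lS_natural:
  assumes u: "(x, h, y) \<in> SAr"
  shows "h \<cdot> lS x = lS y \<cdot> boxm J (idm (fst J)) J x h y"
proof -
  note a = SAr_D[OF u]
  show ?thesis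
    by (rule slice_arr_eqI[where X = "J \<boxdot> x" and Y = y and p = "qT J x \<cdot> (qJ \<otimes> idm (fst x))"])
       (use a u in \<open>simp_all add: lam_natural comp_eq_assoc[OF a(6)]\<close>)
qed

lemma rS_natural:
  assumes u: "(x, h, y) \<in> SAr"
  shows "boxm x h y J (idm (fst J)) J \<cdot> rS x = rS y \<cdot> h"
proof -
  note a = SAr_D[OF u]
  have "rS y \<cdot> h = (qT y J \<cdot> (idm (fst y) \<otimes> qJ))
      \<cdot> (rho C (fst y) \<cdot> h)" using a by (simp add: rS_def)
  also have "\<dots> = (qT y J \<cdot> (idm (fst y) \<otimes> qJ))
      \<cdot> ((h \<otimes> idm \<I>) \<cdot> rho C (fst x))" using a by (simp add: rho_natural)
  also have "\<dots> = boxm x h y J (idm (fst J)) J \<cdot> rS x" using a u by (simp add: rS_def)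
  finally show ?thesis ..
qed

lemma aS_natural:
  assumes u: "(x, h, y) \<in> SAr" and u': "(x', h', y') \<in> SAr" and u'': "(x'', h'', y'') \<in> SAr"
  shows "boxm x h y (x' \<boxdot> x'') (boxm x' h' y' x'' h'' y'') (y' \<boxdot> y'') \<cdot> aS x x' x''
       = aS y y' y'' \<cdot> boxm (x \<boxdot> x') (boxm x h y x' h' y') (y \<boxdot> y') x'' h'' y''"
proof -
  note a = SAr_D[OF u] SAr_D[OF u'] SAr_D[OF u'']
  let ?e = "qT (x \<boxdot> x') x'' \<cdot> (qT x x' \<otimes> idm (fst x''))"
  let ?L = "boxm x h y (x' \<boxdot> x'') (boxm x' h' y' x'' h'' y'') (y' \<boxdot> y'')"
  have "(?L \<cdot> aS x x' x'') \<cdot> ?e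
      = ?L \<cdot> (aS x x' x'' \<cdot> (qT (x \<boxdot> x') x'' \<cdot> (qT x x' \<otimes> idm (fst x''))))"
    using a u u' u'' by simp
  also have "\<dots> = ?L \<cdot> (qT x (x' \<boxdot> x'')
      \<cdot> ((idm (fst x) \<otimes> qT x' x'') \<cdot> alph C (fst x) (fst x') (fst x'')))"
    using a by (simp add: aS_qT)
  also have "\<dots> = qT y (y' \<boxdot> y'')
      \<cdot> ((idm (fst y) \<otimes> qT y' y'') \<cdot> ((h \<otimes> (h' \<otimes> h'')) \<cdot> alph C (fst x) (fst x') (fst x'')))"
    using a u u' u'' by simp
  also have "\<dots> = qT y (y' \<boxdot> y'')
      \<cdot> ((idm (fst y) \<otimes> qT y' y'') \<cdot> (alph C (fst y) (fst y') (fst y'') \<cdot> ((h \<otimes> h') \<otimes> h'')))"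
    using a by (simp add: alph_natural')
  also have "\<dots> = (qT y (y' \<boxdot> y'') \<cdot> ((idm (fst y) \<otimes> qT y' y'') \<cdot> alph C (fst y) (fst y') (fst y'')))
      \<cdot> ((h \<otimes> h') \<otimes> h'')"
    using a by simp
  also have "\<dots> = (aS y y' y'' \<cdot> (qT (y \<boxdot> y') y'' \<cdot> (qT y y' \<otimes> idm (fst y'')))) \<cdot> ((h \<otimes> h') \<otimes> h'')"
    using a by (simp add: aS_qT)
  also have "\<dots> = (aS y y' y'' \<cdot> boxm (x \<boxdot> x') (boxm x h y x' h' y') (y \<boxdot> y') x'' h'' y'') \<cdot> ?e"
    using a u u' u'' by simp
  finally have ch: "(?L \<cdot> aS x x' x'') \<cdot> ?e
      = (aS y y' y'' \<cdot> boxm (x \<boxdot> x') (boxm x h y x' h' y') (y \<boxdot> y') x'' h'' y'') \<cdot> ?e" .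
  show ?thesis
    by (rule slice_arr_eqI[OF ch, where X = "(x \<boxdot> x') \<boxdot> x''" and Y = "y \<boxdot> (y' \<boxdot> y'')"])
        (use a u u' u'' in simp_all)
qed

lemma lS_rS_unit: "lS J \<cdot> rS J = idm (fst J)"
proof -
  have "(lS J \<cdot> rS J) \<cdot> qJ = (lS J \<cdot> (qT J J \<cdot> (idm (fst J) \<otimes> qJ)))
      \<cdot> (rho C (fst J) \<cdot> qJ)" by (simp add: rS_def)
  also have "\<dots> = (lS J \<cdot> (qT J J \<cdot> (idm (fst J) \<otimes> qJ)))
      \<cdot> ((qJ \<otimes> idm \<I>) \<cdot> rho C \<I>)" by (simp add: rho_natural)
  also have "\<dots> = (lam C (fst J) \<cdot> (idm \<I> \<otimes> qJ)) \<cdot> rho C \<I>" by simp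
  also have "\<dots> = (qJ \<cdot> lam C \<I>) \<cdot> rho C \<I>" by (simp add: lam_natural)
  also have "\<dots> = idm (fst J) \<cdot> qJ" by (simp add: lam_rho_unit)
  finally have ch: "(lS J \<cdot> rS J) \<cdot> qJ = idm (fst J) \<cdot> qJ" .
  show ?thesis
    by (rule slice_arr_eqI[OF ch, where X = J and Y = J]) simp_all
qed

lemma rS_def_in_SAr [simp]:
  "x \<in> SOb \<Longrightarrow> (x, qT x J \<cdot> ((idm (fst x) \<otimes> qJ) \<cdot> rho C (fst x)), x \<boxdot> J) \<in> SAr"
  using rS_in_SAr[of x] unfolding rS_def .

lemma slice_triangle:
  assumes x: "x \<in> SOb" and y: "y \<in> SOb"
  shows "boxm x (idm (fst x)) x (J \<boxdot> y) (lS y) y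
      \<cdot> (aS x J y \<cdot> boxm x (rS x) (x \<boxdot> J) y (idm (fst y)) y) = idm (fst (x \<boxdot> y))"
proof -
  let ?B1 = "boxm x (idm (fst x)) x (J \<boxdot> y) (lS y) y"
  have "(?B1 \<cdot> (aS x J y \<cdot> boxm x (rS x) (x \<boxdot> J) y (idm (fst y)) y)) \<cdot> qT x y
     = ?B1 \<cdot> ((aS x J y \<cdot> (qT (x \<boxdot> J) y \<cdot> (qT x J \<otimes> idm (fst y))))
         \<cdot> (((idm (fst x) \<otimes> qJ) \<cdot> rho C (fst x)) \<otimes> idm (fst y)))"
    using x y by (simp add: rS_def)
  also have "\<dots> = ?B1 \<cdot> ((qT x (J \<boxdot> y) \<cdot> ((idm (fst x) \<otimes> qT J y) \<cdot> alph C (fst x) (fst J) (fst y)))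
      \<cdot> (((idm (fst x) \<otimes> qJ) \<cdot> rho C (fst x)) \<otimes> idm (fst y)))"
    using x y by (simp add: aS_qT)
  also have "\<dots> = ?B1 \<cdot> (qT x (J \<boxdot> y)
      \<cdot> ((idm (fst x) \<otimes> qT J y) \<cdot>
      ((alph C (fst x) (fst J) (fst y) \<cdot> ((idm (fst x) \<otimes> qJ) \<otimes> idm (fst y)))
      \<cdot> (rho C (fst x) \<otimes> idm (fst y)))))"
    using x y by simp
  also have "\<dots> = ?B1 \<cdot> (qT x (J \<boxdot> y)
      \<cdot> ((idm (fst x) \<otimes> qT J y) \<cdot>
      (((idm (fst x) \<otimes> (qJ \<otimes> idm (fst y))) \<cdot> alph C (fst x) \<I> (fst y))
      \<cdot> (rho C (fst x) \<otimes> idm (fst y)))))"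
    using x y by (simp add: alph_natural)
  also have "\<dots> = qT x y \<cdot> ((idm (fst x) \<otimes> lam C (fst y))
      \<cdot> (alph C (fst x) \<I> (fst y) \<cdot> (rho C (fst x) \<otimes> idm (fst y))))"
    using x y by simp
  also have "\<dots> = idm (fst (x \<boxdot> y)) \<cdot> qT x y" using x y by (simp add: triangle)
  finally have ch: "(?B1 \<cdot> (aS x J y \<cdot> boxm x (rS x) (x \<boxdot> J) y (idm (fst y)) y)) \<cdot> qT x y
      = idm (fst (x \<boxdot> y)) \<cdot> qT x y" .
  show ?thesis
    by (rule slice_arr_eqI[OF ch, where X = "x \<boxdot> y" and Y = "x \<boxdot> y"]) (use x y in simp_all)
qed

lemma slice_lam_alph:
  assumes x: "x \<in> SOb" and y: "y \<in> SOb"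
  shows "lS (x \<boxdot> y) \<cdot> aS J x y = boxm (J \<boxdot> x) (lS x) x y (idm (fst y)) y"
proof -
  let ?e = "qT (J \<boxdot> x) y \<cdot> ((qT J x \<cdot> (qJ \<otimes> idm (fst x))) \<otimes> idm (fst y))"
  have "(lS (x \<boxdot> y) \<cdot> aS J x y) \<cdot> ?e
      = lS (x \<boxdot> y) \<cdot> ((aS J x y \<cdot> (qT (J \<boxdot> x) y \<cdot> (qT J x \<otimes> idm (fst y))))
          \<cdot> ((qJ \<otimes> idm (fst x)) \<otimes> idm (fst y)))"
    using x y by simp
  also have "\<dots> = lS (x \<boxdot> y) \<cdot>
      ((qT J (x \<boxdot> y) \<cdot> ((idm (fst J) \<otimes> qT x y) \<cdot> alph C (fst J) (fst x) (fst y)))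
      \<cdot> ((qJ \<otimes> idm (fst x)) \<otimes> idm (fst y)))"
    using x y by (simp add: aS_qT)
  also have "\<dots> = lS (x \<boxdot> y) \<cdot>
      (qT J (x \<boxdot> y) \<cdot> ((idm (fst J) \<otimes> qT x y)
      \<cdot> (alph C (fst J) (fst x) (fst y) \<cdot> ((qJ \<otimes> idm (fst x)) \<otimes> idm (fst y)))))"
    using x y by simp
  also have "\<dots> = lS (x \<boxdot> y) \<cdot>
      (qT J (x \<boxdot> y) \<cdot> ((idm (fst J) \<otimes> qT x y)
      \<cdot> ((qJ \<otimes> (idm (fst x) \<otimes> idm (fst y))) \<cdot> alph C \<I> (fst x) (fst y))))"
    using x y by (simp add: alph_natural)
  also have "\<dots> = (lam C (fst (x \<boxdot> y)) \<cdot> (idm \<I> \<otimes> qT x y)) \<cdot> alph C \<I> (fst x) (fst y)"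
    using x y by simp
  also have "\<dots> = (qT x y \<cdot> lam C (tn (fst x) (fst y))) \<cdot> alph C \<I> (fst x) (fst y)"
    using x y by (simp add: lam_natural)
  also have "\<dots> = qT x y \<cdot> (lam C (fst x) \<otimes> idm (fst y))"
    using x y by (simp add: lam_alph)
  also have "\<dots> = boxm (J \<boxdot> x) (lS x) x y (idm (fst y)) y \<cdot> ?e"
    using x y by simp
  finally have ch: "(lS (x \<boxdot> y) \<cdot> aS J x y) \<cdot> ?e = boxm (J \<boxdot> x) (lS x) x y (idm (fst y)) y \<cdot> ?e" .
  show ?thesis
    by (rule slice_arr_eqI[OF ch, where X = "(J \<boxdot> x) \<boxdot> y" and Y = "x \<boxdot> y"]) (use x y in simp_all)
qed

lemma slice_alph_rho:
  assumes x: "x \<in> SOb" and y: "y \<in> SOb"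
  shows "aS x y J \<cdot> rS (x \<boxdot> y) = boxm x (idm (fst x)) x y (rS y) (y \<boxdot> J)"
proof -
  have "(aS x y J \<cdot> rS (x \<boxdot> y)) \<cdot> qT x y
     = aS x y J \<cdot> (qT (x \<boxdot> y) J \<cdot> ((idm (fst (x \<boxdot> y)) \<otimes> qJ) \<cdot> (rho C (fst (x \<boxdot> y)) \<cdot> qT x y)))"
    using x y by (simp add: rS_def)
  also have "\<dots> = aS x y J \<cdot> (qT (x \<boxdot> y) J
      \<cdot> ((idm (fst (x \<boxdot> y)) \<otimes> qJ) \<cdot> ((qT x y \<otimes> idm \<I>) \<cdot> rho C (tn (fst x) (fst y)))))"
    using x y by (simp add: rho_natural)
  also have "\<dots> = (aS x y J \<cdot> (qT (x \<boxdot> y) J \<cdot> (qT x y \<otimes> idm (fst J))))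
      \<cdot> ((idm (tn (fst x) (fst y)) \<otimes> qJ) \<cdot> rho C (tn (fst x) (fst y)))"
    using x y by simp
  also have "\<dots> = (qT x (y \<boxdot> J) \<cdot> ((idm (fst x) \<otimes> qT y J) \<cdot> alph C (fst x) (fst y) (fst J)))
      \<cdot> ((idm (tn (fst x) (fst y)) \<otimes> qJ) \<cdot> rho C (tn (fst x) (fst y)))"
    using x y by (simp add: aS_qT)
  also have "\<dots> = qT x (y \<boxdot> J)
      \<cdot> ((idm (fst x) \<otimes> qT y J) \<cdot>
      ((alph C (fst x) (fst y) (fst J) \<cdot> (idm (tn (fst x) (fst y)) \<otimes> qJ))
      \<cdot> rho C (tn (fst x) (fst y))))"
    using x y by simp
  also have "\<dots> = qT x (y \<boxdot> J)
      \<cdot> ((idm (fst x) \<otimes> qT y J) \<cdot>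
      (((idm (fst x) \<otimes> (idm (fst y) \<otimes> qJ)) \<cdot> alph C (fst x) (fst y) \<I>)
      \<cdot> rho C (tn (fst x) (fst y))))"
    using x y by (simp add: alph_natural_right)
  also have "\<dots> = qT x (y \<boxdot> J)
      \<cdot> ((idm (fst x) \<otimes> qT y J) \<cdot>
      ((idm (fst x) \<otimes> (idm (fst y) \<otimes> qJ))
      \<cdot> (alph C (fst x) (fst y) \<I> \<cdot> rho C (tn (fst x) (fst y)))))"
    using x y by simp
  also have "\<dots> = qT x (y \<boxdot> J)
      \<cdot> ((idm (fst x) \<otimes> qT y J) \<cdot>
      ((idm (fst x) \<otimes> (idm (fst y) \<otimes> qJ)) \<cdot> (idm (fst x) \<otimes> rho C (fst y))))"
    using x y by (simp add: alph_rho)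
  also have "\<dots> = boxm x (idm (fst x)) x y (rS y) (y \<boxdot> J) \<cdot> qT x y"
    using x y by (simp add: rS_def)
  finally have ch: "(aS x y J \<cdot> rS (x \<boxdot> y)) \<cdot> qT x y
      = boxm x (idm (fst x)) x y (rS y) (y \<boxdot> J) \<cdot> qT x y" .
  show ?thesis
    by (rule slice_arr_eqI[OF ch, where X = "x \<boxdot> y" and Y = "x \<boxdot> (y \<boxdot> J)"]) (use x y in simp_all)
qed

lemma slice_pentagon:
  assumes x: "x \<in> SOb" and y: "y \<in> SOb" and z: "z \<in> SOb" and w: "w \<in> SOb"
  shows "boxm x (idm (fst x)) x ((y \<boxdot> z) \<boxdot> w) (aS y z w) (y \<boxdot> (z \<boxdot> w)) \<cdot>
           (aS x (y \<boxdot> z) w \<cdot> boxm ((x \<boxdot> y) \<boxdot> z) (aS x y z) (x \<boxdot> (y \<boxdot> z)) w (idm (fst w)) w)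
         = aS x y (z \<boxdot> w) \<cdot> aS (x \<boxdot> y) z w"
proof -
  let ?e = "qT ((x \<boxdot> y) \<boxdot> z) w \<cdot> ((qT (x \<boxdot> y) z \<cdot> (qT x y \<otimes> idm (fst z))) \<otimes> idm (fst w))"
  let ?BA = "boxm x (idm (fst x)) x ((y \<boxdot> z) \<boxdot> w) (aS y z w) (y \<boxdot> (z \<boxdot> w))"
  let ?BB = "boxm ((x \<boxdot> y) \<boxdot> z) (aS x y z) (x \<boxdot> (y \<boxdot> z)) w (idm (fst w)) w"
  note xyzw = x y z w
  have "(?BA \<cdot> (aS x (y \<boxdot> z) w \<cdot> ?BB)) \<cdot> ?e
     = ?BA \<cdot> (aS x (y \<boxdot> z) w \<cdot> (qT (x \<boxdot> (y \<boxdot> z)) w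
         \<cdot> ((aS x y z \<cdot> (qT (x \<boxdot> y) z \<cdot> (qT x y \<otimes> idm (fst z)))) \<otimes> idm (fst w))))"
    using xyzw by simp
  also have "\<dots> = ?BA \<cdot> (aS x (y \<boxdot> z) w
      \<cdot> (qT (x \<boxdot> (y \<boxdot> z)) w \<cdot> ((qT x (y \<boxdot> z)
      \<cdot> ((idm (fst x) \<otimes> qT y z) \<cdot> alph C (fst x) (fst y) (fst z))) \<otimes> idm (fst w))))"
    using xyzw by (simp add: aS_qT)
  also have "\<dots> = ?BA \<cdot> ((aS x (y \<boxdot> z) w \<cdot> (qT (x \<boxdot> (y \<boxdot> z)) w \<cdot> (qT x (y \<boxdot> z) \<otimes> idm (fst w))))
      \<cdot> (((idm (fst x) \<otimes> qT y z) \<cdot> alph C (fst x) (fst y) (fst z)) \<otimes> idm (fst w)))"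
    using xyzw by simp
  also have "\<dots> = ?BA \<cdot> ((qT x ((y \<boxdot> z) \<boxdot> w)
      \<cdot> ((idm (fst x) \<otimes> qT (y \<boxdot> z) w) \<cdot> alph C (fst x) (fst (y \<boxdot> z)) (fst w)))
      \<cdot> (((idm (fst x) \<otimes> qT y z) \<cdot> alph C (fst x) (fst y) (fst z)) \<otimes> idm (fst w)))"
    using xyzw by (simp add: aS_qT)
  also have "\<dots> = ?BA \<cdot> (qT x ((y \<boxdot> z) \<boxdot> w)
      \<cdot> ((idm (fst x) \<otimes> qT (y \<boxdot> z) w)
      \<cdot> ((alph C (fst x) (fst (y \<boxdot> z)) (fst w) \<cdot> ((idm (fst x) \<otimes> qT y z) \<otimes> idm (fst w)))
      \<cdot> (alph C (fst x) (fst y) (fst z) \<otimes> idm (fst w)))))"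
    using xyzw by simp
  also have "\<dots> = ?BA \<cdot> (qT x ((y \<boxdot> z) \<boxdot> w)
      \<cdot> ((idm (fst x) \<otimes> qT (y \<boxdot> z) w)
      \<cdot> (((idm (fst x) \<otimes> (qT y z \<otimes> idm (fst w))) \<cdot> alph C (fst x) (tn (fst y) (fst z)) (fst w))
      \<cdot> (alph C (fst x) (fst y) (fst z) \<otimes> idm (fst w)))))"
    using xyzw by (simp add: alph_natural)
  also have "\<dots> = qT x (y \<boxdot> (z \<boxdot> w))
      \<cdot> ((idm (fst x) \<otimes> (aS y z w \<cdot> (qT (y \<boxdot> z) w \<cdot> (qT y z \<otimes> idm (fst w)))))
      \<cdot> (alph C (fst x) (tn (fst y) (fst z)) (fst w)
      \<cdot> (alph C (fst x) (fst y) (fst z) \<otimes> idm (fst w))))"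
    using xyzw by simp
  also have "\<dots> = qT x (y \<boxdot> (z \<boxdot> w))
      \<cdot> ((idm (fst x) \<otimes> (qT y (z \<boxdot> w) \<cdot> ((idm (fst y) \<otimes> qT z w) \<cdot> alph C (fst y) (fst z) (fst w))))
      \<cdot> (alph C (fst x) (tn (fst y) (fst z)) (fst w)
      \<cdot> (alph C (fst x) (fst y) (fst z) \<otimes> idm (fst w))))"
    using xyzw by (simp add: aS_qT)
  also have "\<dots> = (qT x (y \<boxdot> (z \<boxdot> w)) \<cdot> (idm (fst x) \<otimes> (qT y (z \<boxdot> w) \<cdot> (idm (fst y) \<otimes> qT z w))))
      \<cdot> ((idm (fst x) \<otimes> alph C (fst y) (fst z) (fst w))
      \<cdot> (alph C (fst x) (tn (fst y) (fst z)) (fst w)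
      \<cdot> (alph C (fst x) (fst y) (fst z) \<otimes> idm (fst w))))"
    using xyzw by simp
  also have "\<dots> = (qT x (y \<boxdot> (z \<boxdot> w)) \<cdot> (idm (fst x) \<otimes> (qT y (z \<boxdot> w) \<cdot> (idm (fst y) \<otimes> qT z w))))
      \<cdot> (alph C (fst x) (fst y) (tn (fst z) (fst w)) \<cdot> alph C (tn (fst x) (fst y)) (fst z) (fst w))"
    using xyzw by (simp add: pentagon)
  finally have L: "(?BA \<cdot> (aS x (y \<boxdot> z) w \<cdot> ?BB)) \<cdot> ?e
      = (qT x (y \<boxdot> (z \<boxdot> w)) \<cdot> (idm (fst x) \<otimes> (qT y (z \<boxdot> w) \<cdot> (idm (fst y) \<otimes> qT z w))))
      \<cdot> (alph C (fst x) (fst y) (tn (fst z) (fst w)) \<cdot> alph C (tn (fst x) (fst y)) (fst z) (fst w))"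
      .
  have "(aS x y (z \<boxdot> w) \<cdot> aS (x \<boxdot> y) z w) \<cdot> ?e
      = aS x y (z \<boxdot> w) \<cdot> ((aS (x \<boxdot> y) z w \<cdot> (qT ((x \<boxdot> y) \<boxdot> z) w \<cdot> (qT (x \<boxdot> y) z \<otimes> idm (fst w))))
          \<cdot> ((qT x y \<otimes> idm (fst z)) \<otimes> idm (fst w)))"
    using xyzw by simp
  also have "\<dots> = aS x y (z \<boxdot> w)
      \<cdot> ((qT (x \<boxdot> y) (z \<boxdot> w) \<cdot> ((idm (fst (x \<boxdot> y)) \<otimes> qT z w)
      \<cdot> alph C (fst (x \<boxdot> y)) (fst z) (fst w))) \<cdot> ((qT x y \<otimes> idm (fst z)) \<otimes> idm (fst w)))"
    using xyzw by (simp add: aS_qT)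
  also have "\<dots> = aS x y (z \<boxdot> w)
      \<cdot> (qT (x \<boxdot> y) (z \<boxdot> w) \<cdot> ((idm (fst (x \<boxdot> y)) \<otimes> qT z w)
      \<cdot> (alph C (fst (x \<boxdot> y)) (fst z) (fst w) \<cdot> ((qT x y \<otimes> idm (fst z)) \<otimes> idm (fst w)))))"
    using xyzw by simp
  also have "\<dots> = aS x y (z \<boxdot> w)
      \<cdot> (qT (x \<boxdot> y) (z \<boxdot> w) \<cdot> ((idm (fst (x \<boxdot> y)) \<otimes> qT z w)
      \<cdot> ((qT x y \<otimes> (idm (fst z) \<otimes> idm (fst w))) \<cdot> alph C (tn (fst x) (fst y)) (fst z) (fst w))))"
    using xyzw by (simp add: alph_natural)
  also have "\<dots> = (aS x y (z \<boxdot> w) \<cdot> (qT (x \<boxdot> y) (z \<boxdot> w) \<cdot> (qT x y \<otimes> idm (fst (z \<boxdot> w)))))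
      \<cdot> ((idm (tn (fst x) (fst y)) \<otimes> qT z w) \<cdot> alph C (tn (fst x) (fst y)) (fst z) (fst w))"
    using xyzw by simp
  also have "\<dots> = (qT x (y \<boxdot> (z \<boxdot> w))
      \<cdot> ((idm (fst x) \<otimes> qT y (z \<boxdot> w)) \<cdot> alph C (fst x) (fst y) (fst (z \<boxdot> w))))
      \<cdot> ((idm (tn (fst x) (fst y)) \<otimes> qT z w) \<cdot> alph C (tn (fst x) (fst y)) (fst z) (fst w))"
    using xyzw by (simp add: aS_qT)
  also have "\<dots> = qT x (y \<boxdot> (z \<boxdot> w))
      \<cdot> ((idm (fst x) \<otimes> qT y (z \<boxdot> w))
      \<cdot> ((alph C (fst x) (fst y) (fst (z \<boxdot> w)) \<cdot> (idm (tn (fst x) (fst y)) \<otimes> qT z w))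
      \<cdot> alph C (tn (fst x) (fst y)) (fst z) (fst w)))"
    using xyzw by simp
  also have "\<dots> = qT x (y \<boxdot> (z \<boxdot> w))
      \<cdot> ((idm (fst x) \<otimes> qT y (z \<boxdot> w))
      \<cdot> (((idm (fst x) \<otimes> (idm (fst y) \<otimes> qT z w)) \<cdot> alph C (fst x) (fst y) (tn (fst z) (fst w)))
      \<cdot> alph C (tn (fst x) (fst y)) (fst z) (fst w)))"
    using xyzw by (simp add: alph_natural_right)
  also have "\<dots> = (qT x (y \<boxdot> (z \<boxdot> w)) \<cdot> (idm (fst x) \<otimes> (qT y (z \<boxdot> w) \<cdot> (idm (fst y) \<otimes> qT z w))))
      \<cdot> (alph C (fst x) (fst y) (tn (fst z) (fst w)) \<cdot> alph C (tn (fst x) (fst y)) (fst z) (fst w))"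
    using xyzw by simp
  finally have R: "(aS x y (z \<boxdot> w) \<cdot> aS (x \<boxdot> y) z w) \<cdot> ?e
      = (qT x (y \<boxdot> (z \<boxdot> w)) \<cdot> (idm (fst x) \<otimes> (qT y (z \<boxdot> w) \<cdot> (idm (fst y) \<otimes> qT z w))))
      \<cdot> (alph C (fst x) (fst y) (tn (fst z) (fst w)) \<cdot> alph C (tn (fst x) (fst y)) (fst z) (fst w))"
      .
  have ch: "(?BA \<cdot> (aS x (y \<boxdot> z) w \<cdot> ?BB)) \<cdot> ?e = (aS x y (z \<boxdot> w) \<cdot> aS (x \<boxdot> y) z w) \<cdot> ?e"
    using L R by simp
  show ?thesis
    by (rule slice_arr_eqI[OF ch, where X = "((x \<boxdot> y) \<boxdot> z) \<boxdot> w" and Y = "x \<boxdot> (y \<boxdot> (z \<boxdot> w))"])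
        (use xyzw in simp_all)
qed

abbreviation "MT \<equiv> slice_skew C E M T e m"

lemma MT_simps [simp]:
  "cobj MT = SOb" "carr MT = SAr" "cdom MT = (\<lambda>u. fst u)" "ccod MT = (\<lambda>u. snd (snd u))"
  "cid MT = (\<lambda>x. (x, idm (fst x), x))"
  "ccomp MT = (\<lambda>v u. (fst u, fst (snd v) \<cdot> fst (snd u), snd (snd v)))"
  "tunit MT = J" "tens MT = (\<boxdot>)" "tensm MT = sl_tensm C E M m" "lam MT = sl_lam C E M e m"
  "rho MT = sl_rho C E M e m" "alph MT = sl_alph C E M m"
  unfolding slice_skew_def by simp_all

lemma hom_MT: "f \<in> hom MT a b \<longleftrightarrow> f \<in> SAr \<and> fst f = a \<and> snd (snd f) = b"
  unfolding hom_def by simp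

lemmas [simp] = boxm_spec(1) lS_spec(1) rS_spec(1) aS_spec(1)

lemma Ball_SAr: "(\<forall>u\<in>SAr. P u) \<longleftrightarrow> (\<forall>x f y. (x, f, y) \<in> SAr \<longrightarrow> P (x, f, y))"
  by (metis prod_cases3)

lemma slice_is_category: "is_category MT"
  unfolding is_category_def MT_simps hom_MT Ball_SAr
  by (intro conjI allI ballI impI) (simp_all add: SAr_triple_iff flip: comp_assoc)

lemma slice_is_skew: "is_skew MT"
  unfolding is_skew_def Let_def
  unfolding MT_simps hom_MT Ball_SAr
  by (intro conjI allI ballI impI slice_is_category[unfolded MT_simps])
    (simp_all add: SAr_triple_iff boxm_id sl_tensm_comp lS_natural rS_natural aS_natural lS_rS_unit
      slice_triangle slice_lam_alph slice_alph_rho slice_pentagon)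

abbreviation "TM \<equiv> slice_fun C E M e m"

lemma TM_simps [simp]: "fo TM = fst" "fm TM = (\<lambda>u. fst (snd u))" "lu TM = qJ" "lm TM = qT"
  unfolding slice_fun_def by simp_all

lemma slice_fun_is_lax: "is_lax MT C TM"
  unfolding is_lax_def is_functor_def Let_def MT_simps TM_simps hom_def mem_Collect_eq Ball_SAr
  by (intro conjI allI ballI impI) (simp_all add: SAr_triple_iff rS_def aS_qT)

lemma slice_is_grading: "is_grading C T e m M MT TM slice_tau"
  unfolding is_grading_def
  using slice_is_skew slice_fun_is_lax by (simp add: slice_tau_def hom_def SAr_iff)

end

section \<open>Gradings factor through \<open>M/T\<close>\<close>

locale graded_monoid_slice = monoid_slice C E M T e m
  for C :: "('o,'m,'z) skewcat_scheme" and E M T e m +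
  fixes Gr :: "('go,'gm,'z2) skewcat_scheme" and G :: "('go,'gm,'o,'m) laxf" and g :: "'go \<Rightarrow> 'm"
  assumes grading: "is_grading C T e m M Gr G g"

sublocale graded_monoid_slice \<subseteq> Gr: skew_monoidal Gr
  using grading unfolding is_grading_def by unfold_locales blast

sublocale graded_monoid_slice \<subseteq> G: lax_functor Gr C G
  using grading unfolding is_grading_def by unfold_locales blast

context graded_monoid_slice
begin

abbreviation "Go \<equiv> fo G"
abbreviation "Gf \<equiv> fm G"
abbreviation "Gu \<equiv> lu G"
abbreviation "Gmu \<equiv> lm G"

lemmas grading_unfolded = grading[unfolded is_grading_def hom_def mem_Collect_eq]

lemma grading_in_Ar [simp]: "d \<in> Gr.Ob \<Longrightarrow> g d \<in> Ar"
  and dom_grading [simp]: "d \<in> Gr.Ob \<Longrightarrow> dm (g d) = Go d"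
  and cod_grading [simp]: "d \<in> Gr.Ob \<Longrightarrow> cd (g d) = T"
  and grading_in_M [simp]: "d \<in> Gr.Ob \<Longrightarrow> g d \<in> M"
  and grading_natural [simp]: "f \<in> Gr.Ar \<Longrightarrow> a = Gr.cd f \<Longrightarrow> g a \<cdot> Gf f = g (Gr.dm f)"
  and grading_unit [simp]: "g (tunit Gr) \<cdot> Gu = e"
  and grading_mult [simp]: "d \<in> Gr.Ob \<Longrightarrow> d' \<in> Gr.Ob \<Longrightarrow> g (Gr.tn d d') \<cdot> Gmu d d' = m \<cdot> (g d \<otimes> g d')"
  using grading_unfolded by simp_all

lemmas grading_natural_assoc [simp] = comp_eq_assoc[OF grading_natural]
lemmas grading_unit_assoc [simp] = comp_eq_assoc[OF grading_unit]
lemmas grading_mult_assoc [simp] = comp_eq_assoc[OF grading_mult]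

declare G.lax_left_unit [simp] G.lax_right_unit [simp] G.lax_assoc [simp]

definition F_ob :: "'go \<Rightarrow> ('o,'m) sobj" where
  "F_ob d = (Go d, g d)"

lemma F_ob_simps [simp]: "fst (F_ob d) = Go d" "snd (F_ob d) = g d"
  unfolding F_ob_def by simp_all

lemma F_ob_in_SOb [simp]: "d \<in> Gr.Ob \<Longrightarrow> F_ob d \<in> SOb"
  unfolding SOb_iff by simp

lemma E_tensor_closed_F_ob [simp]: "d \<in> Gr.Ob \<Longrightarrow> h \<in> E \<Longrightarrow> h \<otimes> idm (Go d) \<in> E"
  using E_tensor_closed_SOb[of "F_ob d" h] by simp

lemma lS_snd_F_ob [simp]: "d \<in> Gr.Ob \<Longrightarrow> g d \<cdot> lS (F_ob d) = snd (J \<boxdot> F_ob d)"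
  using lS_snd[of "F_ob d"] by simp

lemmas lS_snd_F_ob_assoc [simp] = comp_eq_assoc[OF lS_snd_F_ob]

lemma F_id_in_SAr [simp]: "d \<in> Gr.Ob \<Longrightarrow> (F_ob d, idm (Go d), F_ob d) \<in> SAr"
  and F_arr_in_SAr [simp]: "f \<in> Gr.Ar \<Longrightarrow> (F_ob (Gr.dm f), Gf f, F_ob (Gr.cd f)) \<in> SAr"
  by (intro SAr_I; simp)+

definition F_unit :: 'm where
  "F_unit = (SOME d. d \<in> hom C (fst J) (Go (tunit Gr)) \<and> d \<cdot> qJ = Gu \<and> g (tunit Gr) \<cdot> d = snd J)"

lemma F_unit_spec [simp]: "F_unit \<in> Ar" "dm F_unit = fst J" "cd F_unit = Go (tunit Gr)"
  "F_unit \<cdot> qJ = Gu" "g (tunit Gr) \<cdot> F_unit = snd J"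
proof -
  have "F_unit \<in> hom C (fst J) (Go (tunit Gr)) \<and> F_unit \<cdot> qJ = Gu \<and> g (tunit Gr) \<cdot> F_unit = snd J"
    unfolding F_unit_def by (rule diagonal_some) simp_all
  then show "F_unit \<in> Ar" "dm F_unit = fst J" "cd F_unit = Go (tunit Gr)"
    "F_unit \<cdot> qJ = Gu" "g (tunit Gr) \<cdot> F_unit = snd J"
    unfolding hom_def by simp_all
qed

lemmas F_unit_assoc [simp] = comp_eq_assoc[OF F_unit_spec(4)] comp_eq_assoc[OF F_unit_spec(5)]

lemma F_unit_in_SAr [simp]: "(J, F_unit, F_ob (tunit Gr)) \<in> SAr"
  by (intro SAr_I) simp_all

definition F_mult :: "'go \<Rightarrow> 'go \<Rightarrow> 'm" where
  "F_mult d d' = (SOME x. x \<in> hom C (fst (F_ob d \<boxdot> F_ob d')) (Go (Gr.tn d d')) \<and>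
    x \<cdot> qT (F_ob d) (F_ob d') = Gmu d d' \<and> g (Gr.tn d d') \<cdot> x = snd (F_ob d \<boxdot> F_ob d'))"

lemma F_mult_spec [simp]:
  assumes "d \<in> Gr.Ob" "d' \<in> Gr.Ob"
  shows "F_mult d d' \<in> Ar" "dm (F_mult d d') = fst (F_ob d \<boxdot> F_ob d')"
    "cd (F_mult d d') = Go (Gr.tn d d')" "F_mult d d' \<cdot> qT (F_ob d) (F_ob d') = Gmu d d'"
    "g (Gr.tn d d') \<cdot> F_mult d d' = snd (F_ob d \<boxdot> F_ob d')"
proof -
  have "F_mult d d' \<in> hom C (fst (F_ob d \<boxdot> F_ob d')) (Go (Gr.tn d d')) \<and>
      F_mult d d' \<cdot> qT (F_ob d) (F_ob d') = Gmu d d' \<and>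
      g (Gr.tn d d') \<cdot> F_mult d d' = snd (F_ob d \<boxdot> F_ob d')"
    unfolding F_mult_def by (rule diagonal_some) (use assms in simp_all)
  then show "F_mult d d' \<in> Ar" "dm (F_mult d d') = fst (F_ob d \<boxdot> F_ob d')"
    "cd (F_mult d d') = Go (Gr.tn d d')" "F_mult d d' \<cdot> qT (F_ob d) (F_ob d') = Gmu d d'"
    "g (Gr.tn d d') \<cdot> F_mult d d' = snd (F_ob d \<boxdot> F_ob d')"
    unfolding hom_def by simp_all
qed

lemmas F_mult_assoc [simp] = comp_eq_assoc[OF F_mult_spec(4)] comp_eq_assoc[OF F_mult_spec(5)]

lemma F_mult_in_SAr [simp]:
  "d \<in> Gr.Ob \<Longrightarrow> d' \<in> Gr.Ob \<Longrightarrow> (F_ob d \<boxdot> F_ob d', F_mult d d', F_ob (Gr.tn d d')) \<in> SAr"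
  by (intro SAr_I) simp_all

definition F_lax :: "('go,'gm,('o,'m) sobj,('o,'m) smor) laxf" where
  "F_lax = \<lparr> fo = F_ob, fm = (\<lambda>u. (F_ob (Gr.dm u), Gf u, F_ob (Gr.cd u))),
    lu = (J, F_unit, F_ob (tunit Gr)), lm = (\<lambda>d d'. (F_ob d \<boxdot> F_ob d', F_mult d d', F_ob (Gr.tn d d'))) \<rparr>"

lemma F_lax_simps [simp]: "fo F_lax = F_ob" "fm F_lax = (\<lambda>u. (F_ob (Gr.dm u), Gf u, F_ob (Gr.cd u)))"
  "lu F_lax = (J, F_unit, F_ob (tunit Gr))"
  "lm F_lax = (\<lambda>d d'. (F_ob d \<boxdot> F_ob d', F_mult d d', F_ob (Gr.tn d d')))"
  unfolding F_lax_def by simp_all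

lemma F_mult_natural:
  assumes f: "f \<in> Gr.Ar" and h: "h \<in> Gr.Ar"
  shows "Gf (Gr.tm f h) \<cdot> F_mult (Gr.dm f) (Gr.dm h)
      = F_mult (Gr.cd f) (Gr.cd h)
      \<cdot> boxm (F_ob (Gr.dm f)) (Gf f) (F_ob (Gr.cd f)) (F_ob (Gr.dm h)) (Gf h) (F_ob (Gr.cd h))"
proof -
  have ch: "(Gf (Gr.tm f h) \<cdot> F_mult (Gr.dm f) (Gr.dm h)) \<cdot> qT (F_ob (Gr.dm f)) (F_ob (Gr.dm h))
     = (F_mult (Gr.cd f) (Gr.cd h)
         \<cdot> boxm (F_ob (Gr.dm f)) (Gf f) (F_ob (Gr.cd f)) (F_ob (Gr.dm h)) (Gf h) (F_ob (Gr.cd h)))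
         \<cdot> qT (F_ob (Gr.dm f)) (F_ob (Gr.dm h))"
    using f h by (simp add: G.lm_natural)
  show ?thesis
    by (rule slice_arr_eqI[OF ch, where X = "F_ob (Gr.dm f) \<boxdot> F_ob (Gr.dm h)" and Y
        = "F_ob (Gr.tn (Gr.cd f) (Gr.cd h))"])
       (use f h in simp_all)
qed

lemma F_left_unit:
  assumes x: "x \<in> Gr.Ob"
  shows "Gf (lam Gr x) \<cdot> (F_mult (tunit Gr) x
      \<cdot> boxm J F_unit (F_ob (tunit Gr)) (F_ob x) (idm (Go x)) (F_ob x)) = lS (F_ob x)"
proof -
  have ch: "(Gf (lam Gr x) \<cdot>
      (F_mult (tunit Gr) x \<cdot> boxm J F_unit (F_ob (tunit Gr)) (F_ob x) (idm (Go x)) (F_ob x)))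
      \<cdot> (qT J (F_ob x) \<cdot> (qJ \<otimes> idm (Go x)))
     = lS (F_ob x) \<cdot> (qT J (F_ob x) \<cdot> (qJ \<otimes> idm (Go x)))"
    using x by simp
  show ?thesis
    by (rule slice_arr_eqI[OF ch, where X = "J \<boxdot> F_ob x" and Y = "F_ob x"]) (use x in simp_all)
qed

lemma F_right_unit:
  assumes x: "x \<in> Gr.Ob"
  shows "F_mult x (tunit Gr)
      \<cdot> (boxm (F_ob x) (idm (Go x)) (F_ob x) J F_unit (F_ob (tunit Gr)) \<cdot> rS (F_ob x))
      = Gf (rho Gr x)"
  using x by (simp add: rS_def)

lemma F_assoc:
  assumes x: "x \<in> Gr.Ob" and y: "y \<in> Gr.Ob" and z: "z \<in> Gr.Ob"
  shows "Gf (alph Gr x y z) \<cdot>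
      (F_mult (Gr.tn x y) z \<cdot> boxm (F_ob x \<boxdot> F_ob y) (F_mult x y) (F_ob (Gr.tn x y)) (F_ob z)
      (idm (Go z)) (F_ob z))
       = F_mult x (Gr.tn y z) \<cdot> (boxm (F_ob x) (idm (Go x)) (F_ob x) (F_ob y \<boxdot> F_ob z) (F_mult y z)
           (F_ob (Gr.tn y z)) \<cdot> aS (F_ob x) (F_ob y) (F_ob z))"
proof -
  let ?e = "qT (F_ob x \<boxdot> F_ob y) (F_ob z) \<cdot> (qT (F_ob x) (F_ob y) \<otimes> idm (Go z))"
  have ch: "(Gf (alph Gr x y z)
      \<cdot> (F_mult (Gr.tn x y) z \<cdot> boxm (F_ob x \<boxdot> F_ob y) (F_mult x y) (F_ob (Gr.tn x y)) (F_ob z)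
      (idm (Go z)) (F_ob z))) \<cdot> ?e
       = (F_mult x (Gr.tn y z) \<cdot> (boxm (F_ob x) (idm (Go x)) (F_ob x) (F_ob y \<boxdot> F_ob z) (F_mult y z)
           (F_ob (Gr.tn y z)) \<cdot> aS (F_ob x) (F_ob y) (F_ob z))) \<cdot> ?e"
    using x y z by (simp add: aS_qT[of "F_ob x" "F_ob y" "F_ob z", simplified])
  show ?thesis
    by (rule slice_arr_eqI[OF ch, where X = "(F_ob x \<boxdot> F_ob y) \<boxdot> F_ob z" and Y
        = "F_ob (Gr.tn x (Gr.tn y z))"])
       (use x y z in simp_all)
qed

lemma F_is_lax: "is_lax Gr MT F_lax"
  unfolding is_lax_def is_functor_def Let_def F_lax_simps MT_simps hom_MT
  by (intro conjI ballI impI)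
    (simp_all add: G.fm_comp F_mult_natural F_left_unit F_right_unit F_assoc)

definition F_iso :: "'go \<Rightarrow> 'm" where
  "F_iso d = idm (Go d)"

lemma F_is_grading_mor: "is_grading_mor C Gr G g MT TM slice_tau F_lax F_iso"
proof -
  have mt: "is_montrans Gr C (lax_comp C TM F_lax) G F_iso"
    unfolding is_montrans_def lax_comp_def F_iso_def
    by (simp add: hom_def)
  show ?thesis unfolding is_grading_mor_def
    using F_is_lax mt by (simp add: id_is_iso F_iso_def slice_tau_def)
qed

definition comparison ::
  "('go,'gm,('o,'m) sobj,('o,'m) smor) laxf \<Rightarrow> ('go \<Rightarrow> 'm) \<Rightarrow> 'go \<Rightarrow> ('o,'m) smor" where
  "comparison H \<theta> d = (fo H d, \<theta> d, F_ob d)"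

lemma comparison_natural:
  assumes "is_grading_2cell C Gr MT TM H \<theta> H' \<theta>' \<beta>" and d: "d \<in> Gr.Ob"
  shows "ccomp MT (comparison H' \<theta>' d) (\<beta> d) = comparison H \<theta> d"
proof -
  have "\<beta> d \<in> hom MT (fo H d) (fo H' d)" "\<theta>' d \<cdot> fst (snd (\<beta> d)) = \<theta> d"
    using assms unfolding is_grading_2cell_def is_montrans_def by auto
  then show ?thesis
    unfolding hom_MT comparison_def by simp
qed

end

locale grading_mor_to_slice = graded_monoid_slice C E M T e m Gr G g
  for C :: "('o,'m,'z) skewcat_scheme" and E M T e m and Gr :: "('go,'gm,'z2) skewcat_scheme" and G
      g +
  fixes H :: "('go,'gm,('o,'m) sobj,('o,'m) smor) laxf" and \<theta> :: "'go \<Rightarrow> 'm"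
  assumes grading_mor: "is_grading_mor C Gr G g MT TM slice_tau H \<theta>"

sublocale grading_mor_to_slice \<subseteq> H: lax_functor Gr MT H
  using grading_mor unfolding is_grading_mor_def by unfold_locales blast

context grading_mor_to_slice
begin

abbreviation "Hf u \<equiv> fst (snd (fm H u))"
abbreviation "Hu \<equiv> fst (snd (lu H))"
abbreviation "Hm x y \<equiv> fst (snd (lm H x y))"

lemma theta_iso: "d \<in> Gr.Ob \<Longrightarrow> is_iso C (\<theta> d)"
  and grading_theta [simp]: "d \<in> Gr.Ob \<Longrightarrow> g d \<cdot> \<theta> d = snd (fo H d)"
  using grading_mor unfolding is_grading_mor_def slice_tau_def by simp_all

lemmas theta_montrans =
  grading_mor[unfolded is_grading_mor_def is_montrans_def lax_comp_def hom_def, simplified]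

lemma theta_in_Ar [simp]: "d \<in> Gr.Ob \<Longrightarrow> \<theta> d \<in> Ar"
  and dom_theta [simp]: "d \<in> Gr.Ob \<Longrightarrow> dm (\<theta> d) = fst (fo H d)"
  and cod_theta [simp]: "d \<in> Gr.Ob \<Longrightarrow> cd (\<theta> d) = Go d"
  and theta_natural: "u \<in> Gr.Ar \<Longrightarrow> \<theta> (Gr.cd u) \<cdot> Hf u = Gf u \<cdot> \<theta> (Gr.dm u)"
  and theta_unit [simp]: "\<theta> (tunit Gr) \<cdot> (Hu \<cdot> qJ) = Gu"
  and theta_mult [simp]: "x \<in> Gr.Ob \<Longrightarrow> y \<in> Gr.Ob \<Longrightarrow>
    \<theta> (Gr.tn x y) \<cdot> (Hm x y \<cdot> qT (fo H x) (fo H y)) = Gmu x y \<cdot> (\<theta> x \<otimes> \<theta> y)"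
  using theta_montrans by auto

lemma fo_H_in_SOb [simp]: "d \<in> Gr.Ob \<Longrightarrow> fo H d \<in> SOb"
  using H.fo_in_Ob by simp

lemma fm_H_ends [simp]: "u \<in> Gr.Ar \<Longrightarrow> fst (fm H u) = fo H (Gr.dm u)"
    "u \<in> Gr.Ar \<Longrightarrow> snd (snd (fm H u)) = fo H (Gr.cd u)"
  and lu_H_ends [simp]: "fst (lu H) = J" "snd (snd (lu H)) = fo H (tunit Gr)"
  and lm_H_ends [simp]: "x \<in> Gr.Ob \<Longrightarrow> y \<in> Gr.Ob \<Longrightarrow> fst (lm H x y) = fo H x \<boxdot> fo H y"
    "x \<in> Gr.Ob \<Longrightarrow> y \<in> Gr.Ob \<Longrightarrow> snd (snd (lm H x y)) = fo H (Gr.tn x y)"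
  using H.dom_fm H.cod_fm H.dom_lu H.cod_lu H.dom_lm H.cod_lm by simp_all

lemma fm_H_in_SAr: "u \<in> Gr.Ar \<Longrightarrow> (fo H (Gr.dm u), Hf u, fo H (Gr.cd u)) \<in> SAr"
  using H.fm_in_Ar[of u] by (metis MT_simps(2) fm_H_ends prod.collapse)

lemma lu_H_eq: "lu H = (J, Hu, fo H (tunit Gr))"
  by (metis lu_H_ends prod.collapse)

lemma lu_H_in_SAr: "(J, Hu, fo H (tunit Gr)) \<in> SAr"
  using H.lu_in_Ar by (simp add: lu_H_eq[symmetric])

lemma lm_H_in_SAr: "x \<in> Gr.Ob \<Longrightarrow> y \<in> Gr.Ob \<Longrightarrow> (fo H x \<boxdot> fo H y, Hm x y, fo H (Gr.tn x y)) \<in> SAr"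
  using H.lm_in_Ar[of x y] by (metis MT_simps(2) lm_H_ends prod.collapse)

lemmas H_components [simp]
    = SAr_D(3-6)[OF fm_H_in_SAr] SAr_D(3-6)[OF lu_H_in_SAr] SAr_D(3-6)[OF lm_H_in_SAr]
lemmas H_components_assoc [simp] =
  comp_eq_assoc[OF SAr_D(6)[OF lu_H_in_SAr]] comp_eq_assoc[OF SAr_D(6)[OF lm_H_in_SAr]]

lemmas grading_theta_assoc [simp] = comp_eq_assoc[OF grading_theta]

lemma comparison_in_SAr [simp]: "d \<in> Gr.Ob \<Longrightarrow> (fo H d, \<theta> d, F_ob d) \<in> SAr"
  by (intro SAr_I) simp_all

lemma theta_Hu: "\<theta> (tunit Gr) \<cdot> Hu = F_unit"
proof -
  have ch: "(\<theta> (tunit Gr) \<cdot> Hu) \<cdot> qJ = F_unit \<cdot> qJ" by simp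
  show ?thesis by (rule slice_arr_eqI[OF ch, where X = J and Y = "F_ob (tunit Gr)"]) simp_all
qed

lemma theta_Hm: assumes x: "x \<in> Gr.Ob" and y: "y \<in> Gr.Ob"
  shows "\<theta> (Gr.tn x y) \<cdot> Hm x y = F_mult x y \<cdot> boxm (fo H x) (\<theta> x) (F_ob x) (fo H y) (\<theta> y) (F_ob y)"
proof -
  have ch: "(\<theta> (Gr.tn x y) \<cdot> Hm x y) \<cdot> qT (fo H x) (fo H y)
     = (F_mult x y \<cdot> boxm (fo H x) (\<theta> x) (F_ob x) (fo H y) (\<theta> y) (F_ob y)) \<cdot> qT (fo H x) (fo H y)"
    using x y by simp
  show ?thesis
    by (rule slice_arr_eqI[OF ch, where X = "fo H x \<boxdot> fo H y" and Y = "F_ob (Gr.tn x y)"])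
        (use x y in simp_all)
qed

lemma comparison_is_2cell: "is_grading_2cell C Gr MT TM H \<theta> F_lax F_iso (comparison H \<theta>)"
  unfolding is_grading_2cell_def is_montrans_def comparison_def hom_MT
  by (intro conjI ballI) (simp_all add: theta_natural theta_Hu theta_Hm F_iso_def)

abbreviation "\<theta>inv d \<equiv> inv_arr (\<theta> d)"

lemma theta_inv_in_Ar [simp]: "d \<in> Gr.Ob \<Longrightarrow> \<theta>inv d \<in> Ar"
  and dom_theta_inv [simp]: "d \<in> Gr.Ob \<Longrightarrow> dm (\<theta>inv d) = Go d"
  and cod_theta_inv [simp]: "d \<in> Gr.Ob \<Longrightarrow> cd (\<theta>inv d) = fst (fo H d)"
  and theta_inv_theta [simp]: "d \<in> Gr.Ob \<Longrightarrow> \<theta>inv d \<cdot> \<theta> d = idm (fst (fo H d))"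
  and theta_theta_inv [simp]: "d \<in> Gr.Ob \<Longrightarrow> \<theta> d \<cdot> \<theta>inv d = idm (Go d)"
  using inv_arr[OF theta_iso, of d] by simp_all

lemma theta_inv_theta_assoc [simp]:
  "d \<in> Gr.Ob \<Longrightarrow> k \<in> Ar \<Longrightarrow> cd k = fst (fo H d) \<Longrightarrow> \<theta>inv d \<cdot> (\<theta> d \<cdot> k) = k"
  using comp_eq_assoc[OF theta_inv_theta, of d k] by simp

lemma theta_theta_inv_assoc [simp]:
  "d \<in> Gr.Ob \<Longrightarrow> k \<in> Ar \<Longrightarrow> cd k = Go d \<Longrightarrow> \<theta> d \<cdot> (\<theta>inv d \<cdot> k) = k"
  using comp_eq_assoc[OF theta_theta_inv, of d k] by simp

lemma theta_inv_snd [simp]: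
  assumes "d \<in> Gr.Ob"
  shows "snd (fo H d) \<cdot> \<theta>inv d = g d"
proof -
  have "snd (fo H d) \<cdot> \<theta>inv d = (g d \<cdot> \<theta> d) \<cdot> \<theta>inv d"
    using assms by simp
  also have "\<dots> = g d"
    using assms by (simp del: grading_theta)
  finally show ?thesis .
qed

lemmas theta_inv_snd_assoc [simp] = comp_eq_assoc[OF theta_inv_snd]

lemma comparison_inv_in_SAr [simp]: "d \<in> Gr.Ob \<Longrightarrow> (F_ob d, \<theta>inv d, fo H d) \<in> SAr"
  by (intro SAr_I) simp_all

lemma theta_inv_natural: assumes u: "u \<in> Gr.Ar"
  shows "\<theta>inv (Gr.cd u) \<cdot> Gf u = Hf u \<cdot> \<theta>inv (Gr.dm u)"
proof -
  have "\<theta>inv (Gr.cd u) \<cdot> Gf u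
      = \<theta>inv (Gr.cd u) \<cdot> ((Gf u \<cdot> \<theta> (Gr.dm u)) \<cdot> \<theta>inv (Gr.dm u))" using u by simp
  also have "\<dots> = Hf u \<cdot> \<theta>inv (Gr.dm u)" using u by (simp add: theta_natural[symmetric])
  finally show ?thesis .
qed

lemma theta_inv_Hu: "\<theta>inv (tunit Gr) \<cdot> F_unit = Hu"
proof -
  have "\<theta>inv (tunit Gr) \<cdot> F_unit = \<theta>inv (tunit Gr) \<cdot> (\<theta> (tunit Gr) \<cdot> Hu)" by (simp add: theta_Hu)
  also have "\<dots> = Hu" by simp
  finally show ?thesis .
qed

lemma theta_inv_Hm: assumes x: "x \<in> Gr.Ob" and y: "y \<in> Gr.Ob"
  shows "\<theta>inv (Gr.tn x y) \<cdot> F_mult x y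
      = Hm x y \<cdot> boxm (F_ob x) (\<theta>inv x) (fo H x) (F_ob y) (\<theta>inv y) (fo H y)"
proof -
  have Hm_qT: "Hm x y \<cdot> qT (fo H x) (fo H y) = \<theta>inv (Gr.tn x y) \<cdot> (Gmu x y \<cdot> (\<theta> x \<otimes> \<theta> y))"
  proof -
    have "Hm x y \<cdot> qT (fo H x) (fo H y)
        = \<theta>inv (Gr.tn x y) \<cdot> (\<theta> (Gr.tn x y) \<cdot> (Hm x y \<cdot> qT (fo H x) (fo H y)))"
      using x y by (simp del: theta_mult)
    also have "\<dots> = \<theta>inv (Gr.tn x y) \<cdot> (Gmu x y \<cdot> (\<theta> x \<otimes> \<theta> y))" using x y by simp
    finally show ?thesis .
  qed
  have "(\<theta>inv (Gr.tn x y) \<cdot> F_mult x y) \<cdot> qT (F_ob x) (F_ob y)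
      = \<theta>inv (Gr.tn x y) \<cdot> (Gmu x y \<cdot> ((\<theta> x \<cdot> \<theta>inv x) \<otimes> (\<theta> y \<cdot> \<theta>inv y)))"
    using x y by simp
  also have "\<dots> = (\<theta>inv (Gr.tn x y) \<cdot> (Gmu x y \<cdot> (\<theta> x \<otimes> \<theta> y))) \<cdot> (\<theta>inv x \<otimes> \<theta>inv y)"
    using x y by simp
  also have "\<dots> = (Hm x y \<cdot> qT (fo H x) (fo H y)) \<cdot> (\<theta>inv x \<otimes> \<theta>inv y)"
    by (simp only: Hm_qT)
  also have "\<dots> = (Hm x y \<cdot> boxm (F_ob x) (\<theta>inv x) (fo H x) (F_ob y) (\<theta>inv y) (fo H y))
      \<cdot> qT (F_ob x) (F_ob y)"
    using x y by (simp del: theta_mult)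
  finally have ch: "(\<theta>inv (Gr.tn x y) \<cdot> F_mult x y) \<cdot> qT (F_ob x) (F_ob y) =
     (Hm x y \<cdot> boxm (F_ob x) (\<theta>inv x) (fo H x) (F_ob y) (\<theta>inv y) (fo H y)) \<cdot> qT (F_ob x) (F_ob y)" .
  show ?thesis
    by (rule slice_arr_eqI[OF ch, where X = "F_ob x \<boxdot> F_ob y" and Y = "fo H (Gr.tn x y)"])
        (use x y in simp_all)
qed

lemma comparison_inv_is_2cell:
  "is_grading_2cell C Gr MT TM F_lax F_iso H \<theta> (\<lambda>d. (F_ob d, \<theta>inv d, fo H d))"
  unfolding is_grading_2cell_def is_montrans_def hom_MT
  by (intro conjI ballI)
    (simp_all add: theta_inv_natural theta_inv_Hu theta_inv_Hm lu_H_eq[symmetric] F_iso_def)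

lemma comparison_is_inv_2cell: "is_inv_grading_2cell C Gr MT TM H \<theta> F_lax F_iso (comparison H \<theta>)"
  unfolding is_inv_grading_2cell_def
proof (intro conjI exI[of _ "\<lambda>d. (F_ob d, \<theta>inv d, fo H d)"])
  show "is_grading_2cell C Gr MT TM H \<theta> F_lax F_iso (comparison H \<theta>)"
    by (rule comparison_is_2cell)
  show "is_grading_2cell C Gr MT TM F_lax F_iso H \<theta> (\<lambda>d. (F_ob d, \<theta>inv d, fo H d))"
    by (rule comparison_inv_is_2cell)
  show "\<forall>d\<in>Gr.Ob. ccomp MT (F_ob d, \<theta>inv d, fo H d) (comparison H \<theta> d) = cid MT (fo H d) \<and>
      ccomp MT (comparison H \<theta> d) (F_ob d, \<theta>inv d, fo H d) = cid MT (fo F_lax d)"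
    by (simp add: comparison_def)
qed

end

lemma (in graded_monoid_slice) comparison_is_inv_grading_2cell:
  assumes "is_grading_mor C Gr G g MT TM slice_tau H \<theta>"
  shows "is_inv_grading_2cell C Gr MT TM H \<theta> F_lax F_iso (comparison H \<theta>)"
proof -
  interpret grading_mor_to_slice C E M T e m Gr G g H \<theta>
    by (intro grading_mor_to_slice.intro grading_mor_to_slice_axioms.intro
        graded_monoid_slice_axioms assms)
  show ?thesis
    by (rule comparison_is_inv_2cell)
qed

theorem theorem3p11:
  fixes C :: "('o,'m) skewcat" and T :: 'o and e m :: 'm and E M :: "'m set"
    and Gr :: "('go,'gm) skewcat" and G :: "('go,'gm,'o,'m) laxf" and g :: "'go \<Rightarrow> 'm"
  assumes skew: "is_skew C"
    and monoid: "is_monoid C T e m"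
    and ofs: "is_ofs C E M"
    and Eclosed: "\<forall>x\<in>sl_obj C M T. \<forall>h\<in>E. tensm C h (cid C (fst x)) \<in> E"
    and grading: "is_grading C T e m M Gr G g"
  shows "is_grading C T e m M (slice_skew C E M T e m) (slice_fun C E M e m) slice_tau \<and>
    (\<exists>F f. is_grading_mor C Gr G g (slice_skew C E M T e m) (slice_fun C E M e m) slice_tau F f \<and>
      (\<exists>\<phi>.
        (\<forall>F' f'. is_grading_mor C Gr G g (slice_skew C E M T e m) (slice_fun C E M e m) slice_tau F' f'
           \<longrightarrow> is_inv_grading_2cell C Gr (slice_skew C E M T e m) (slice_fun C E M e m) F' f' F f (\<phi> F' f')) \<and>
        (\<forall>F' f' F'' f'' \<beta>.
           is_grading_mor C Gr G g (slice_skew C E M T e m) (slice_fun C E M e m) slice_tau F' f' \<longrightarrow>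
           is_grading_mor C Gr G g (slice_skew C E M T e m) (slice_fun C E M e m) slice_tau F'' f'' \<longrightarrow>
           is_grading_2cell C Gr (slice_skew C E M T e m) (slice_fun C E M e m) F' f' F'' f'' \<beta> \<longrightarrow>
           (\<forall>d\<in>cobj Gr. ccomp (slice_skew C E M T e m) (\<phi> F'' f'' d) (\<beta> d) = \<phi> F' f' d))))"
proof -
  interpret graded_monoid_slice C E M T e m Gr G g
    by unfold_locales (rule assms is_skew_category[OF skew])+
  show ?thesis
    using slice_is_grading F_is_grading_mor comparison_is_inv_grading_2cell comparison_natural
    by (intro conjI exI[of _ F_lax] exI[of _ F_iso] exI[of _ comparison]) blast+
qed

end
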